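(* For each $\gamma\in(0,1)$ there exist $\varepsilon_0^B>0$ and a constant $C(\gamma)$ such that for all $\varepsilon\in(0,\varepsilon_0^B)$ and all $f\in H^1(\mathbb{T}^d)$, $$\|f\|_{H^1(\mathbb{T}^d)}^2\le\gamma\int_{\mathbb{T}^d}\int_{\mathbb{T}^d}\frac{|\nabla f(x)-\nabla f(y)|^2}{\varepsilon^2}\omega_\varepsilon(|x-y|)\,dx\,dy+C(\gamma)\|f\|_{L^2(\mathbb{T}^d)}^2.$$
   Context: $\omega:\mathbb{R}^d\to[0,\infty)$ is a smooth radial function (written $\omega(|x|)$) supported in the unit ball with $\int_{\mathbb{R}^d}\omega=1$; $\omega_\varepsilon(x)=\varepsilon^{-d}\omega(x/\varepsilon)$; $|x-y|$ is the periodic distance on the torus $\mathbb{T}^d$. *)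

theory Defs
  imports "HOL-Analysis.Analysis"
begin

text \<open>The torus T^d is realised as the unit cube [0,1]^d with periodic identification;
functions on T^d are functions on real^'n that are 1-periodic in every coordinate.\<close>

definition torus_cube :: "(real^'n) set" where
  "torus_cube = {x. \<forall>i. 0 \<le> x $ i \<and> x $ i \<le> 1}"

definition lattice_vec :: "int^'n \<Rightarrow> real^'n" where
  "lattice_vec k = (\<chi> i. real_of_int (k $ i))"

definition periodic :: "(real^'n \<Rightarrow> 'b) \<Rightarrow> bool" where
  "periodic f \<longleftrightarrow> (\<forall>x k. f (x + lattice_vec k) = f x)"

definition tdist :: "real^'n \<Rightarrow> real^'n \<Rightarrow> real" where
  "tdist x y = Inf (range (\<lambda>k. norm (x - y - lattice_vec k)))"

definition has_partial :: "(real^'n \<Rightarrow> real) \<Rightarrow> 'n \<Rightarrow> (real^'n \<Rightarrow> real) \<Rightarrow> bool" where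
  "has_partial f i D \<longleftrightarrow>
     (\<forall>x. ((\<lambda>t. f (x + t *\<^sub>R axis i 1)) has_real_derivative D x) (at 0))"

fun Ck :: "nat \<Rightarrow> (real^'n \<Rightarrow> real) \<Rightarrow> bool" where
  "Ck 0 f = continuous_on UNIV f"
| "Ck (Suc k) f = (continuous_on UNIV f \<and>
       (\<forall>i. \<exists>D. has_partial f i D \<and> Ck k D))"

definition smooth :: "(real^'n \<Rightarrow> real) \<Rightarrow> bool" where
  "smooth f \<longleftrightarrow> (\<forall>k. Ck k f)"

definition H1_weak_grad :: "(real^'n \<Rightarrow> real) \<Rightarrow> (real^'n \<Rightarrow> real^'n) \<Rightarrow> bool" where
  "H1_weak_grad f g \<longleftrightarrow>
     periodic f \<and> periodic g \<and>
     f \<in> borel_measurable lborel \<and> g \<in> borel_measurable lborel \<and>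
     set_integrable lborel torus_cube (\<lambda>x. (f x)\<^sup>2) \<and>
     set_integrable lborel torus_cube (\<lambda>x. (norm (g x))\<^sup>2) \<and>
     (\<forall>\<phi> i D. smooth \<phi> \<and> periodic \<phi> \<and> has_partial \<phi> i D \<longrightarrow>
        (LINT x:torus_cube|lborel. f x * D x) = - (LINT x:torus_cube|lborel. g x $ i * \<phi> x))"

definition L2_sq :: "(real^'n \<Rightarrow> real) \<Rightarrow> real" where
  "L2_sq f = (LINT x:torus_cube|lborel. (f x)\<^sup>2)"

definition H1_sq :: "(real^'n \<Rightarrow> real) \<Rightarrow> (real^'n \<Rightarrow> real^'n) \<Rightarrow> real" where
  "H1_sq f g = L2_sq f + (LINT x:torus_cube|lborel. (norm (g x))\<^sup>2)"

definition moll :: "(real \<Rightarrow> real) \<Rightarrow> real \<Rightarrow> nat \<Rightarrow> real \<Rightarrow> real" where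
  "moll \<omega> \<epsilon> d r = \<omega> (r / \<epsilon>) / \<epsilon> ^ d"

end

theory Submission
  imports Defs
begin

text \<open>
  Fix a scale \<open>\<delta>\<close> and split the gradient \<open>g\<close> into \<open>g - \<rho>\<^sub>\<delta> * g\<close> and \<open>\<rho>\<^sub>\<delta> * g\<close>, where \<open>\<rho>\<^sub>\<delta>\<close> is
  the mollifier rescaled to radius \<open>\<delta>\<close>. By Cauchy-Schwarz the first part is bounded pointwise by
  \<open>\<integral> \<rho>\<^sub>\<delta>(h) |g(x+h) - g(x)|\<^sup>2 dh\<close>. For the second part the weak derivative moves the
  derivative onto the kernel, \<open>\<rho>\<^sub>\<delta> * \<partial>\<^sub>if = \<partial>\<^sub>i\<rho>\<^sub>\<delta> * f\<close>, and \<open>\<parallel>\<partial>\<^sub>i\<rho>\<^sub>\<delta>\<parallel>\<^sub>1 = O(1/\<delta>)\<close>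
  bounds it by \<open>C/\<delta>\<^sup>2 \<parallel>f\<parallel>\<^sup>2\<close>; on the torus this uses the periodized kernel as test function.

  Integrating in \<open>x\<close>, the first part becomes \<open>\<integral> \<rho>\<^sub>\<delta>(h) E(h) dh\<close> with the shift energy
  \<open>E(h) = \<integral>\<^sub>T |g(x+h) - g(x)|\<^sup>2 dx\<close>. Telescoping gives \<open>E(m h) \<le> m\<^sup>2 E(h)\<close>, so for
  \<open>\<delta> = m \<epsilon>\<close> the \<open>\<delta>\<close>-scale energy is at most \<open>m\<^sup>2\<close> times the \<open>\<epsilon>\<close>-scale one, which is
  \<open>\<epsilon>\<^sup>2\<close> times the nonlocal energy of the theorem. Choosing \<open>\<delta>\<close> between \<open>\<delta>\<^sub>0\<close> and
  \<open>2\<delta>\<^sub>0\<close> with \<open>8\<delta>\<^sub>0\<^sup>2 \<le> \<gamma>\<close> makes the factor \<open>2 m\<^sup>2 \<epsilon>\<^sup>2\<close> at most \<open>\<gamma>\<close>, while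
  \<open>C/\<delta>\<^sup>2 \<le> C/\<delta>\<^sub>0\<^sup>2\<close> stays bounded.
\<close>

section \<open>Partial derivatives and smoothness\<close>

lemma has_partial_unique: "has_partial f i D1 \<Longrightarrow> has_partial f i D2 \<Longrightarrow> D1 = D2"
  unfolding has_partial_def using DERIV_unique by (metis ext)

lemma Ck_imp_continuous: "Ck k f \<Longrightarrow> continuous_on UNIV f"
  by (cases k) auto

lemma smooth_imp_continuous: "smooth f \<Longrightarrow> continuous_on UNIV f"
  unfolding smooth_def using Ck_imp_continuous by blast

lemma smooth_imp_borel_measurable: "smooth f \<Longrightarrow> f \<in> borel_measurable borel"
  using smooth_imp_continuous borel_measurable_continuous_onI by blast

lemma smooth_has_partial:
  assumes "smooth f"
  obtains D where "has_partial f i D" "smooth D"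
proof -
  from assms have "Ck (Suc 0) f" by (simp add: smooth_def)
  then obtain D where D: "has_partial f i D" by auto
  have "Ck k D" for k
  proof -
    from assms have "Ck (Suc k) f" unfolding smooth_def by blast
    then obtain D' where "has_partial f i D'" "Ck k D'" by auto
    with D has_partial_unique show ?thesis by metis
  qed
  then show ?thesis using that D smooth_def by blast
qed

lemma has_partial_affine:
  assumes "has_partial f i D"
  shows "has_partial (\<lambda>v. c * f (s *\<^sub>R v + a)) i (\<lambda>v. (c * s) * D (s *\<^sub>R v + a))"
  unfolding has_partial_def
proof
  fix x
  let ?y = "s *\<^sub>R x + a"
  have "((\<lambda>t. f (?y + t *\<^sub>R axis i 1)) has_real_derivative D ?y) (at (s * 0))"
    using assms unfolding has_partial_def by simp
  from DERIV_chain2[OF this DERIV_cmult_Id]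
  have "((\<lambda>t. c * f (?y + (s * t) *\<^sub>R axis i 1)) has_real_derivative c * (D ?y * s)) (at 0)"
    by (intro DERIV_cmult) simp
  moreover have E: "(\<lambda>t. c * f (?y + (s * t) *\<^sub>R axis i 1)) = (\<lambda>t. c * f (s *\<^sub>R (x + t *\<^sub>R axis i 1) + a))"
    by (rule ext) (simp add: algebra_simps)
  ultimately show "((\<lambda>t. c * f (s *\<^sub>R (x + t *\<^sub>R axis i 1) + a)) has_real_derivative (c * s) * D ?y) (at 0)"
    by (simp only: E mult_ac)
qed

lemma continuous_on_affine_comp:
  "continuous_on UNIV (f::real^'n \<Rightarrow> real) \<Longrightarrow> continuous_on UNIV (\<lambda>v. c * f (s *\<^sub>R v + a))"
proof -
  assume "continuous_on UNIV f"
  moreover have "continuous_on UNIV (\<lambda>v::real^'n. s *\<^sub>R v + a)" by (intro continuous_intros)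
  ultimately have "continuous_on UNIV (\<lambda>v. f (s *\<^sub>R v + a))"
    using continuous_on_compose2 by blast
  then show ?thesis by (intro continuous_intros)
qed

lemma Ck_affine: "Ck k f \<Longrightarrow> Ck k (\<lambda>v. c * f (s *\<^sub>R v + a))"
proof (induction k arbitrary: f c)
  case 0
  then show ?case by (simp add: continuous_on_affine_comp)
next
  case (Suc k)
  have "\<exists>D. has_partial (\<lambda>v. c * f (s *\<^sub>R v + a)) i D \<and> Ck k D" for i
  proof -
    from Suc.prems obtain D where "has_partial f i D" "Ck k D" by auto
    then show ?thesis using has_partial_affine Suc.IH by blast
  qed
  with Suc.prems show ?case by (simp add: continuous_on_affine_comp)
qed

lemma smooth_affine: "smooth f \<Longrightarrow> smooth (\<lambda>v. c * f (s *\<^sub>R v + a))"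
  unfolding smooth_def using Ck_affine by blast

lemma has_real_derivative_line_cong_open:
  fixes x :: "real^'n"
  assumes "open U" "x \<in> U" "\<forall>y\<in>U. F y = h y"
    and "((\<lambda>t. h (x + t *\<^sub>R axis i 1)) has_real_derivative d) (at 0)"
  shows "((\<lambda>t. F (x + t *\<^sub>R axis i 1)) has_real_derivative d) (at 0)"
proof -
  obtain r where r: "r > 0" "ball x r \<subseteq> U" using assms(1,2) open_contains_ball by blast
  have "x + t *\<^sub>R axis i 1 \<in> U" if "dist t 0 < r" for t :: real
    using that r by (auto simp: dist_norm)
  then have "eventually (\<lambda>t. F (x + t *\<^sub>R axis i 1) = h (x + t *\<^sub>R axis i 1)) (nhds (0::real))"
    unfolding eventually_nhds_metric using r(1) assms(3) by blast
  from DERIV_cong_ev[OF refl this refl] assms(4) show ?thesis by simp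
qed

lemma has_partial_locally:
  assumes "\<And>x. \<exists>r>0. \<exists>h Dh. has_partial h i Dh \<and> (\<forall>w\<in>ball x r. F w = h w) \<and> DF x = Dh x"
  shows "has_partial F i DF"
  unfolding has_partial_def
proof
  fix x
  from assms obtain r h Dh
    where "r > 0" "has_partial h i Dh" "\<forall>w\<in>ball x r. F w = h w" "DF x = Dh x"
    by blast
  then show "((\<lambda>t. F (x + t *\<^sub>R axis i 1)) has_real_derivative DF x) (at 0)"
    using has_real_derivative_line_cong_open[of "ball x r" x F h i "Dh x"]
    unfolding has_partial_def by simp
qed

lemma has_partial_eq_on_open:
  assumes "has_partial F i D" "has_partial h i Dh" "open U" "\<forall>w\<in>U. F w = h w" "w \<in> U"
  shows "D w = Dh w"
  using has_real_derivative_line_cong_open[of U w F h i "Dh w"] assms DERIV_unique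
  unfolding has_partial_def by blast

lemma continuous_on_locally:
  assumes "\<And>w0. \<exists>r>0. \<exists>h. continuous_on UNIV h \<and> (\<forall>w\<in>ball w0 r. F w = h w)"
  shows "continuous_on UNIV (F::real^'n \<Rightarrow> real)"
proof -
  have "isCont F w0" for w0
  proof -
    from assms obtain r h where r: "r > 0" "continuous_on UNIV h" "\<forall>w\<in>ball w0 r. F w = h w"
      by blast
    have "eventually (\<lambda>w. F w = h w) (nhds w0)"
      using eventually_nhds_in_open[of "ball w0 r" w0] r by (auto elim: eventually_mono)
    with r(2) show ?thesis by (simp add: continuous_on_eq_continuous_at isCont_cong)
  qed
  then show ?thesis by (simp add: continuous_on_eq_continuous_at)
qed

lemma Ck_locally:
  "(\<And>w0. \<exists>r>0. \<exists>h. Ck k h \<and> (\<forall>w\<in>ball w0 r. F w = h w)) \<Longrightarrow> Ck k (F::real^'n \<Rightarrow> real)"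
proof (induction k arbitrary: F)
  case 0
  then show ?case using continuous_on_locally[of F] by simp
next
  case (Suc k)
  then obtain R H where RH: "\<And>w0. R w0 > 0" "\<And>w0. Ck (Suc k) (H w0)"
    "\<And>w0. \<forall>w\<in>ball w0 (R w0). F w = H w0 w"
    by metis
  have "continuous_on UNIV F"
    using RH Ck_imp_continuous by (intro continuous_on_locally) blast
  moreover have "\<exists>D. has_partial F i D \<and> Ck k D" for i
  proof -
    have "\<forall>w0. \<exists>Dh. has_partial (H w0) i Dh \<and> Ck k Dh" using RH(2) by simp
    then obtain DH where DH: "\<And>w0. has_partial (H w0) i (DH w0)" "\<And>w0. Ck k (DH w0)"
      by metis
    define D where "D w = DH w w" for w
    have D: "has_partial F i D"
      using RH(1,3) DH(1) unfolding D_def by (intro has_partial_locally) blast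
    have "\<forall>w\<in>ball w0 (R w0). D w = DH w0 w" for w0
      using has_partial_eq_on_open[OF D DH(1) _ RH(3)] by blast
    then have "Ck k D"
      using RH(1) DH(2) by (intro Suc.IH) blast
    with D show ?thesis by blast
  qed
  ultimately show ?case by simp
qed

lemma smooth_locally:
  "(\<And>w0. \<exists>r>0. \<exists>h. smooth h \<and> (\<forall>w\<in>ball w0 r. F w = h w)) \<Longrightarrow> smooth (F::real^'n \<Rightarrow> real)"
  unfolding smooth_def by (metis Ck_locally)

lemma has_partial_eq_0_outside:
  fixes f :: "real^'n \<Rightarrow> real"
  assumes "has_partial f i D" "\<And>v. t < norm v \<Longrightarrow> f v = 0" "t < norm v"
  shows "D v = 0"
proof -
  have "open {v::real^'n. t < norm v}" by (intro open_Collect_less continuous_intros)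
  moreover have "has_partial (\<lambda>_. 0) i (\<lambda>_. 0)" by (simp add: has_partial_def)
  ultimately show ?thesis using has_partial_eq_on_open[OF assms(1)] assms(2,3) by fastforce
qed

section \<open>The lattice of integer vectors and the fundamental cube\<close>

lemma lattice_vec_nth [simp]: "lattice_vec k $ i = real_of_int (k $ i)"
  by (simp add: lattice_vec_def)

lemma lattice_vec_zero [simp]: "lattice_vec 0 = 0"
  by (simp add: vec_eq_iff)

lemma lattice_vec_add: "lattice_vec (a + b) = lattice_vec a + lattice_vec b"
  by (simp add: vec_eq_iff)

lemma lattice_vec_minus: "lattice_vec (- a) = - lattice_vec a"
  by (simp add: vec_eq_iff)

text \<open>Sums over the lattice are written as series along a fixed enumeration of it.\<close>

definition lattice_enum :: "nat \<Rightarrow> int^'n" where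
  "lattice_enum = from_nat_into UNIV"

lemma infinite_UNIV_int_vec: "infinite (UNIV :: (int^'n) set)"
proof
  assume "finite (UNIV :: (int^'n) set)"
  moreover have "inj (\<lambda>m::int. vec m :: int^'n)" by (auto simp: inj_def vec_eq_iff)
  ultimately have "finite (UNIV :: int set)" using finite_imageD by (metis finite_subset top_greatest)
  then show False by simp
qed

lemma bij_lattice_enum: "bij (lattice_enum :: nat \<Rightarrow> int^'n)"
  unfolding lattice_enum_def
  using bij_betw_from_nat_into[OF countableI_type infinite_UNIV_int_vec] by simp

lemma suminf_lattice_enum_single:
  fixes F :: "int^'n \<Rightarrow> ennreal"
  assumes "\<And>k. k \<noteq> j \<Longrightarrow> F k = 0"
  shows "(\<Sum>n. F (lattice_enum n)) = F j"
proof -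
  obtain n0 where n0: "lattice_enum n0 = j" using bij_lattice_enum by (metis bij_pointE)
  have "lattice_enum n \<noteq> j" if "n \<noteq> n0" for n
    using that n0 bij_lattice_enum by (metis bij_pointE)
  then have "(\<Sum>n. F (lattice_enum n)) = (\<Sum>n\<in>{n0}. F (lattice_enum n))"
    by (intro suminf_finite) (auto simp: assms)
  then show ?thesis using n0 by simp
qed

definition half_open_cube :: "real \<Rightarrow> (real^'n) set" where
  "half_open_cube c = {x. \<forall>i. c \<le> x $ i \<and> x $ i < c + 1}"

lemma half_open_cube_borel [measurable]: "half_open_cube c \<in> sets (borel :: (real^'n) measure)"
proof -
  have "half_open_cube c = (\<Inter>i. {x::real^'n. c \<le> x $ i} \<inter> {x. x $ i < c + 1})"
    unfolding half_open_cube_def by auto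
  also have "\<dots> \<in> sets borel"
    by (intro sets.countable_INT' countable_finite) (auto intro!: sets.Int)
  finally show ?thesis .
qed

lemma torus_cube_eq_cbox: "torus_cube = cbox (0::real^'n) (vec 1)"
  unfolding torus_cube_def by (auto simp: mem_box_cart)

lemma torus_cube_borel [measurable]: "torus_cube \<in> sets (borel :: (real^'n) measure)"
  unfolding torus_cube_eq_cbox by (simp add: borel_closed)

lemma emeasure_torus_cube_finite: "emeasure lborel (torus_cube :: (real^'n) set) < \<infinity>"
  unfolding torus_cube_eq_cbox by (rule emeasure_compact_finite) simp

lemma translate_mem_half_open_cube_iff:
  "w + lattice_vec k \<in> half_open_cube c \<longleftrightarrow> k = (\<chi> i. - \<lfloor>w $ i - c\<rfloor>)"
proof -
  have "(c \<le> w $ i + k $ i \<and> w $ i + k $ i < c + 1) \<longleftrightarrow> \<lfloor>w $ i - c\<rfloor> = - k $ i" for i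
    by (simp add: floor_eq_iff) linarith
  then show ?thesis unfolding half_open_cube_def by (auto simp: vec_eq_iff)
qed

lemma abs_le_half_if_mem_half_open_cube:
  assumes "h \<in> half_open_cube (-1/2)"
  shows "\<bar>h $ i\<bar> \<le> 1/2"
proof -
  have "- 1/2 \<le> h $ i" "h $ i < - 1/2 + 1" using assms unfolding half_open_cube_def by auto
  then show ?thesis by linarith
qed

lemma half_le_norm_if_not_mem_half_open_cube:
  assumes "h \<notin> half_open_cube (-1/2)"
  shows "1/2 \<le> norm h"
proof -
  obtain i where "\<not> (- 1/2 \<le> h $ i \<and> h $ i < - 1/2 + 1)"
    using assms unfolding half_open_cube_def by auto
  then show ?thesis using component_le_norm_cart[of h i] by linarith
qed

lemma suminf_indicator_half_open_cube_add:
  "(\<Sum>n. indicator (half_open_cube c) (w + lattice_vec (lattice_enum n)) :: ennreal) = 1"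
  by (subst suminf_lattice_enum_single[where j="\<chi> i. - \<lfloor>w $ i - c\<rfloor>"])
     (simp_all add: translate_mem_half_open_cube_iff)

lemma suminf_indicator_half_open_cube_diff:
  "(\<Sum>n. indicator (half_open_cube c) (w - lattice_vec (lattice_enum n)) :: ennreal) = 1"
proof -
  have "w - lattice_vec k \<in> half_open_cube c \<longleftrightarrow> k = (\<chi> i. \<lfloor>w $ i - c\<rfloor>)" for k
    using translate_mem_half_open_cube_iff[of w "- k" c]
    by (auto simp: lattice_vec_minus vec_eq_iff)
  then show ?thesis
    by (subst suminf_lattice_enum_single[where j="\<chi> i. \<lfloor>w $ i - c\<rfloor>"]) simp_all
qed

lemma nn_integral_lborel_affine:
  fixes G :: "real^'n \<Rightarrow> ennreal"
  assumes [measurable]: "G \<in> borel_measurable borel" and "c \<noteq> 0"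
  shows "(\<integral>\<^sup>+x. G x \<partial>lborel) = ennreal (\<bar>c\<bar> ^ CARD('n)) * (\<integral>\<^sup>+x. G (t + c *\<^sub>R x) \<partial>lborel)"
proof -
  have "(\<integral>\<^sup>+x. G x \<partial>lborel)
      = (\<integral>\<^sup>+x. G x \<partial>density (distr lborel borel (\<lambda>x. t + c *\<^sub>R x)) (\<lambda>_. \<bar>c\<bar> ^ DIM(real^'n)))"
    using lborel_affine[OF assms(2)] by metis
  also have "\<dots> = (\<integral>\<^sup>+x. ennreal (\<bar>c\<bar> ^ CARD('n)) * G (t + c *\<^sub>R x) \<partial>lborel)"
    by (simp add: nn_integral_density nn_integral_distr)
  also have "\<dots> = ennreal (\<bar>c\<bar> ^ CARD('n)) * (\<integral>\<^sup>+x. G (t + c *\<^sub>R x) \<partial>lborel)"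
    by (simp add: nn_integral_cmult)
  finally show ?thesis .
qed

lemma nn_integral_lborel_translate:
  fixes G :: "real^'n \<Rightarrow> ennreal"
  assumes "G \<in> borel_measurable borel"
  shows "(\<integral>\<^sup>+x. G x \<partial>lborel) = (\<integral>\<^sup>+x. G (a + x) \<partial>lborel)"
  using nn_integral_lborel_affine[OF assms, of 1 a] by simp

lemma integral_lborel_translate:
  fixes F :: "real^'n \<Rightarrow> real"
  assumes "F \<in> borel_measurable borel"
  shows "(LINT y|lborel. F y) = (LINT h|lborel. F (a + h))"
  using integral_distr[of "(+) a" lborel borel F] assms by (simp add: lborel_distr_plus)

lemma nn_integral_lborel_eq_half_open_cube_suminf:
  fixes F :: "real^'n \<Rightarrow> ennreal"
  assumes [measurable]: "F \<in> borel_measurable borel"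
  shows "(\<integral>\<^sup>+y. F y \<partial>lborel)
       = (\<integral>\<^sup>+x\<in>half_open_cube c. (\<Sum>n. F (x + lattice_vec (lattice_enum n))) \<partial>lborel)"
proof -
  let ?L = "\<lambda>n. lattice_vec (lattice_enum n) :: real^'n"
  have "(\<integral>\<^sup>+y. F y \<partial>lborel) = (\<integral>\<^sup>+y. (\<Sum>n. F y * indicator (half_open_cube c) (y - ?L n)) \<partial>lborel)"
    by (simp add: ennreal_suminf_cmult suminf_indicator_half_open_cube_diff)
  also have "\<dots> = (\<Sum>n. \<integral>\<^sup>+y. F y * indicator (half_open_cube c) (y - ?L n) \<partial>lborel)"
    by (rule nn_integral_suminf) measurable
  also have "\<dots> = (\<Sum>n. \<integral>\<^sup>+x. F (x + ?L n) * indicator (half_open_cube c) x \<partial>lborel)"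
  proof (rule suminf_cong)
    fix n
    show "(\<integral>\<^sup>+y. F y * indicator (half_open_cube c) (y - ?L n) \<partial>lborel)
        = (\<integral>\<^sup>+x. F (x + ?L n) * indicator (half_open_cube c) x \<partial>lborel)"
      by (subst nn_integral_lborel_translate[where a="?L n"]) (simp_all add: add.commute)
  qed
  also have "\<dots> = (\<integral>\<^sup>+x\<in>half_open_cube c. (\<Sum>n. F (x + ?L n)) \<partial>lborel)"
    by (subst nn_integral_suminf[symmetric]) (simp_all add: ennreal_suminf_multc)
  finally show ?thesis .
qed

lemma hyperplane_null_sets: "{x::real^'n. x $ i = c} \<in> null_sets lborel"
proof -
  have "negligible {x::real^'n. x \<bullet> axis i 1 = c}"
    by (rule negligible_standard_hyperplane) simp
  then have "{x::real^'n. x $ i = c} \<in> null_sets lebesgue"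
    by (simp add: negligible_iff_null_sets cart_eq_inner_axis)
  moreover have "{x::real^'n. x $ i = c} \<in> sets lborel" by measurable
  ultimately show ?thesis using null_sets_completion_iff by blast
qed

lemma nn_integral_torus_cube_eq_half_open:
  "(\<integral>\<^sup>+x\<in>torus_cube. f x \<partial>lborel) = (\<integral>\<^sup>+x\<in>half_open_cube 0. f x \<partial>lborel)"
proof (rule nn_integral_cong_AE)
  have "AE x::real^'n in lborel. \<forall>i\<in>UNIV. x $ i \<noteq> 1"
    using AE_not_in[OF hyperplane_null_sets] by (intro AE_finite_allI) auto
  then show "AE x in lborel. f x * indicator torus_cube x = f x * indicator (half_open_cube 0) x"
    by eventually_elim (auto simp: indicator_def torus_cube_def half_open_cube_def less_le)
qed

lemma nn_integral_periodize:
  fixes H \<rho> \<phi> :: "real^'n \<Rightarrow> ennreal"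
  assumes [measurable]: "H \<in> borel_measurable borel" "\<rho> \<in> borel_measurable borel"
    and H: "\<And>y k. H (y + lattice_vec k) = H y"
    and \<phi>: "\<And>w. (\<Sum>n. \<rho> (w + lattice_vec (lattice_enum n))) = \<phi> w"
  shows "(\<integral>\<^sup>+y. H y * \<rho> (y - x) \<partial>lborel) = (\<integral>\<^sup>+y\<in>torus_cube. H y * \<phi> (y - x) \<partial>lborel)"
proof -
  have "(\<Sum>n. H (y + lattice_vec (lattice_enum n)) * \<rho> (y + lattice_vec (lattice_enum n) - x))
      = H y * \<phi> (y - x)" for y
    using \<phi>[of "y - x"] by (simp add: H ennreal_suminf_cmult algebra_simps)
  then show ?thesis
    by (simp add: nn_integral_lborel_eq_half_open_cube_suminf[where c=0]
                  nn_integral_torus_cube_eq_half_open)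
qed

lemma nn_integral_torus_cube_translate:
  fixes H :: "real^'n \<Rightarrow> ennreal"
  assumes [measurable]: "H \<in> borel_measurable borel" and H: "\<And>y k. H (y + lattice_vec k) = H y"
  shows "(\<integral>\<^sup>+y\<in>torus_cube. H (a + y) \<partial>lborel) = (\<integral>\<^sup>+y\<in>torus_cube. H y \<partial>lborel)"
proof -
  have "(\<integral>\<^sup>+y\<in>torus_cube. H y \<partial>lborel) = (\<integral>\<^sup>+y. H y * indicator (half_open_cube 0) (y - a) \<partial>lborel)"
    by (subst nn_integral_periodize[where \<phi>="\<lambda>_. 1"])
       (auto simp: H suminf_indicator_half_open_cube_add)
  also have "\<dots> = (\<integral>\<^sup>+y\<in>half_open_cube 0. H (a + y) \<partial>lborel)"
    by (subst nn_integral_lborel_translate[where a=a]) auto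
  finally show ?thesis by (simp add: nn_integral_torus_cube_eq_half_open)
qed

lemma set_integral_periodize:
  fixes h \<rho> \<phi> :: "real^'n \<Rightarrow> real"
  assumes [measurable]: "h \<in> borel_measurable borel" "\<rho> \<in> borel_measurable borel"
      "\<phi> \<in> borel_measurable borel"
    and h: "\<And>y k. h (y + lattice_vec k) = h y"
    and nonneg: "\<And>v. 0 \<le> \<rho> v" "\<And>v. 0 \<le> \<phi> v"
    and \<phi>: "\<And>w. (\<Sum>n. ennreal (\<rho> (w + lattice_vec (lattice_enum n)))) = ennreal (\<phi> w)"
    and int: "set_integrable lborel torus_cube (\<lambda>y. h y * \<phi> (y - x))"
  shows "(LINT y|lborel. h y * \<rho> (y - x)) = (LINT y:torus_cube|lborel. h y * \<phi> (y - x))"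
proof -
  have P: "(\<integral>\<^sup>+y. ennreal (H y * \<rho> (y - x)) \<partial>lborel)
      = (\<integral>\<^sup>+y. ennreal (indicator torus_cube y *\<^sub>R (H y * \<phi> (y - x))) \<partial>lborel)"
    if [measurable]: "H \<in> borel_measurable borel" and "\<And>y k. H (y + lattice_vec k) = H y"
    for H :: "real^'n \<Rightarrow> real"
  proof -
    have "(\<integral>\<^sup>+y. ennreal (H y * \<rho> (y - x)) \<partial>lborel)
        = (\<integral>\<^sup>+y. ennreal (H y) * ennreal (\<rho> (y - x)) \<partial>lborel)"
      by (simp add: ennreal_mult'' nonneg)
    also have "\<dots> = (\<integral>\<^sup>+y\<in>torus_cube. ennreal (H y) * ennreal (\<phi> (y - x)) \<partial>lborel)"
      by (rule nn_integral_periodize) (use that \<phi> in auto)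
    also have "\<dots> = (\<integral>\<^sup>+y. ennreal (indicator torus_cube y *\<^sub>R (H y * \<phi> (y - x))) \<partial>lborel)"
      by (intro nn_integral_cong) (simp add: ennreal_mult'' nonneg indicator_def)
    finally show ?thesis .
  qed
  have int': "integrable lborel (\<lambda>y. indicator torus_cube y *\<^sub>R (h y * \<phi> (y - x)))"
    using int unfolding set_integrable_def .
  have "integrable lborel (\<lambda>y. h y * \<rho> (y - x))"
    using P[of "\<lambda>y. \<bar>h y\<bar>"] int' nonneg
    by (simp add: h integrable_iff_bounded abs_mult)
  then show ?thesis
    unfolding set_lebesgue_integral_def real_lebesgue_integral_def[OF int']
    using P[of h] P[of "\<lambda>y. - h y"] by (simp add: h real_lebesgue_integral_def)
qed

lemma nn_integral_torus_convolution:
  fixes F K :: "real^'n \<Rightarrow> ennreal"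
  assumes [measurable]: "F \<in> borel_measurable borel" "K \<in> borel_measurable borel"
    and K: "\<And>y. (\<integral>\<^sup>+x\<in>torus_cube. K (y - x) \<partial>lborel) = c"
  shows "(\<integral>\<^sup>+x\<in>torus_cube. (\<integral>\<^sup>+y\<in>torus_cube. F y * K (y - x) \<partial>lborel) \<partial>lborel)
       = c * (\<integral>\<^sup>+y\<in>torus_cube. F y \<partial>lborel)"
proof -
  have "(\<integral>\<^sup>+x\<in>torus_cube. (\<integral>\<^sup>+y\<in>torus_cube. F y * K (y - x) \<partial>lborel) \<partial>lborel)
      = (\<integral>\<^sup>+x. (\<integral>\<^sup>+y. F y * K (y - x) * indicator torus_cube y * indicator torus_cube x \<partial>lborel) \<partial>lborel)"
    by (intro nn_integral_cong nn_integral_multc[symmetric]) measurable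
  also have "\<dots> = (\<integral>\<^sup>+y. (\<integral>\<^sup>+x.
      F y * K (y - x) * indicator torus_cube y * indicator torus_cube x \<partial>lborel) \<partial>lborel)"
    by (rule lborel_pair.Fubini'[symmetric]) measurable
  also have "\<dots> = (\<integral>\<^sup>+y. (F y * indicator torus_cube y) * c \<partial>lborel)"
  proof (intro nn_integral_cong)
    fix y
    have "(\<integral>\<^sup>+x. F y * K (y - x) * indicator torus_cube y * indicator torus_cube x \<partial>lborel)
        = (\<integral>\<^sup>+x. (F y * indicator torus_cube y) * (K (y - x) * indicator torus_cube x) \<partial>lborel)"
      by (simp only: mult_ac)
    also have "\<dots> = (F y * indicator torus_cube y) * c"
      by (subst nn_integral_cmult) (simp_all add: K)
    finally show "(\<integral>\<^sup>+x. F y * K (y - x) * indicator torus_cube y * indicator torus_cube x \<partial>lborel)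
        = (F y * indicator torus_cube y) * c" .
  qed
  also have "\<dots> = c * (\<integral>\<^sup>+y\<in>torus_cube. F y \<partial>lborel)"
    by (subst nn_integral_cmult[symmetric]) (simp_all add: mult_ac)
  finally show ?thesis .
qed

section \<open>Periodization of kernels supported in a small ball\<close>

definition nearest_lattice :: "real^'n \<Rightarrow> real^'n" where
  "nearest_lattice w = lattice_vec (\<chi> i. \<lfloor>w $ i + 1/2\<rfloor>)"

text \<open>For a kernel supported in a ball of radius less than \<open>1/2\<close>, at most one lattice
  translate contributes to the periodic sum, so the sum can be written without a series.\<close>

definition periodization :: "(real^'n \<Rightarrow> real) \<Rightarrow> real^'n \<Rightarrow> real" where
  "periodization \<rho> w = \<rho> (w - nearest_lattice w)"

lemma nearest_lattice_add: "nearest_lattice (w + lattice_vec k) = nearest_lattice w + lattice_vec k"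
proof -
  have "\<lfloor>w $ i + real_of_int (k $ i) + 1/2\<rfloor> = \<lfloor>w $ i + 1/2\<rfloor> + k $ i" for i
    by (metis add.commute add.left_commute floor_add_int)
  then show ?thesis unfolding nearest_lattice_def by (simp add: vec_eq_iff)
qed

lemma periodization_add_lattice_vec [simp]:
  "periodization \<rho> (w + lattice_vec k) = periodization \<rho> w"
  unfolding periodization_def nearest_lattice_add by simp

lemma periodization_nonneg: "(\<And>v. 0 \<le> \<rho> v) \<Longrightarrow> 0 \<le> periodization \<rho> w"
  unfolding periodization_def by blast

lemma abs_periodization_le: "(\<And>v. \<bar>\<rho> v\<bar> \<le> B) \<Longrightarrow> \<bar>periodization \<rho> w\<bar> \<le> B"
  unfolding periodization_def by blast

lemma norm_add_lattice_vec_ge_half: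
  assumes "k \<noteq> - (\<chi> i. \<lfloor>w $ i + 1/2\<rfloor>)"
  shows "1/2 \<le> norm (w + lattice_vec k)"
proof -
  obtain i where i: "k $ i \<noteq> - \<lfloor>w $ i + 1/2\<rfloor>" using assms by (auto simp: vec_eq_iff)
  have "1/2 \<le> \<bar>w $ i + k $ i\<bar>"
    using i by (simp add: floor_eq_iff abs_if) linarith
  also have "\<dots> \<le> norm (w + lattice_vec k)"
    using component_le_norm_cart[of "w + lattice_vec k" i] by simp
  finally show ?thesis .
qed

lemma suminf_lattice_add_eq_periodization:
  fixes \<rho> :: "real^'n \<Rightarrow> real"
  assumes "\<And>v. s < norm v \<Longrightarrow> \<rho> v = 0" "s < 1/2"
  shows "(\<Sum>n. ennreal (\<rho> (w + lattice_vec (lattice_enum n)))) = ennreal (periodization \<rho> w)"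
proof -
  have "(\<Sum>n. ennreal (\<rho> (w + lattice_vec (lattice_enum n))))
      = ennreal (\<rho> (w + lattice_vec (- (\<chi> i. \<lfloor>w $ i + 1/2\<rfloor>))))"
    using norm_add_lattice_vec_ge_half assms
    by (intro suminf_lattice_enum_single) fastforce
  then show ?thesis by (simp add: periodization_def nearest_lattice_def lattice_vec_minus)
qed

lemma suminf_lattice_diff_eq_periodization:
  fixes \<rho> :: "real^'n \<Rightarrow> real"
  assumes "\<And>v. s < norm v \<Longrightarrow> \<rho> v = 0" "s < 1/2"
  shows "(\<Sum>n. ennreal (\<rho> (w - lattice_vec (lattice_enum n)))) = ennreal (periodization \<rho> w)"
proof -
  have "k \<noteq> (\<chi> i. \<lfloor>w $ i + 1/2\<rfloor>) \<Longrightarrow> 1/2 \<le> norm (w - lattice_vec k)" for k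
    using norm_add_lattice_vec_ge_half[of "- k" w] by (auto simp: lattice_vec_minus)
  then have "(\<Sum>n. ennreal (\<rho> (w - lattice_vec (lattice_enum n))))
      = ennreal (\<rho> (w - lattice_vec (\<chi> i. \<lfloor>w $ i + 1/2\<rfloor>)))"
    using assms by (intro suminf_lattice_enum_single) fastforce
  then show ?thesis by (simp add: periodization_def nearest_lattice_def)
qed

lemma floor_half_change_far:
  fixes a b s :: real
  assumes "\<bar>b - a\<bar> < (1/2 - s) / 2" "s < 1/2" "\<lfloor>a + 1/2\<rfloor> \<noteq> \<lfloor>b + 1/2\<rfloor>"
  shows "s < \<bar>b - \<lfloor>a + 1/2\<rfloor>\<bar>" "s < \<bar>b - \<lfloor>b + 1/2\<rfloor>\<bar>"
proof -
  define p q where "p = \<lfloor>a + 1/2\<rfloor>" and "q = \<lfloor>b + 1/2\<rfloor>"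
  have "p \<le> a + 1/2" "a + 1/2 < p + 1" "q \<le> b + 1/2" "b + 1/2 < q + 1"
    unfolding p_def q_def by linarith+
  moreover have "real_of_int p + 1 \<le> q \<or> real_of_int q + 1 \<le> p"
    using assms(3) unfolding p_def[symmetric] q_def[symmetric] by linarith
  ultimately show "s < \<bar>b - p\<bar>" "s < \<bar>b - q\<bar>"
    using assms(1,2) by (auto simp: abs_if)
qed

lemma periodization_eq_near:
  fixes \<rho> :: "real^'n \<Rightarrow> real"
  assumes "\<And>v. s < norm v \<Longrightarrow> \<rho> v = 0" "s < 1/2" "dist w w0 < (1/2 - s) / 2"
  shows "periodization \<rho> w = \<rho> (w - nearest_lattice w0)"
proof (cases "nearest_lattice w = nearest_lattice w0")
  case False
  then obtain i where i: "\<lfloor>w $ i + 1/2\<rfloor> \<noteq> \<lfloor>w0 $ i + 1/2\<rfloor>"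
    by (auto simp: nearest_lattice_def vec_eq_iff)
  have "\<bar>w $ i - w0 $ i\<bar> < (1/2 - s) / 2"
    using component_le_norm_cart[of "w - w0" i] assms(3) by (simp add: dist_norm)
  from floor_half_change_far[OF this assms(2) not_sym[OF i]]
  have "s < norm (w - nearest_lattice w0)" "s < norm (w - nearest_lattice w)"
    using component_le_norm_cart[of "w - nearest_lattice w0" i]
      component_le_norm_cart[of "w - nearest_lattice w" i]
    by (simp_all add: nearest_lattice_def)
  then show ?thesis using assms(1) by (simp add: periodization_def)
qed (simp add: periodization_def)

lemma smooth_periodization:
  fixes \<rho> :: "real^'n \<Rightarrow> real"
  assumes "\<And>v. s < norm v \<Longrightarrow> \<rho> v = 0" "s < 1/2" "smooth \<rho>"
  shows "smooth (periodization \<rho>)"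
proof (rule smooth_locally)
  fix w0 :: "real^'n"
  have "smooth (\<lambda>v. 1 * \<rho> (1 *\<^sub>R v + (- nearest_lattice w0)))"
    using smooth_affine[OF assms(3)] by blast
  moreover have "\<forall>w\<in>ball w0 ((1/2 - s) / 2). periodization \<rho> w = 1 * \<rho> (1 *\<^sub>R w + (- nearest_lattice w0))"
    using periodization_eq_near[OF assms(1,2)] by (auto simp: dist_commute)
  ultimately show "\<exists>r>0. \<exists>h. smooth h \<and> (\<forall>w\<in>ball w0 r. periodization \<rho> w = h w)"
    using assms(2) by (intro exI[of _ "(1/2 - s) / 2"]) auto
qed

lemma has_partial_periodization:
  fixes \<rho> :: "real^'n \<Rightarrow> real"
  assumes "\<And>v. s < norm v \<Longrightarrow> \<rho> v = 0" "\<And>v. s < norm v \<Longrightarrow> D v = 0" "s < 1/2"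
    and "has_partial \<rho> i D"
  shows "has_partial (periodization \<rho>) i (periodization D)"
proof (rule has_partial_locally)
  fix x :: "real^'n"
  have "has_partial (\<lambda>v. 1 * \<rho> (1 *\<^sub>R v + (- nearest_lattice x))) i
      (\<lambda>v. (1 * 1) * D (1 *\<^sub>R v + (- nearest_lattice x)))"
    by (rule has_partial_affine[OF assms(4)])
  moreover have "\<forall>w\<in>ball x ((1/2 - s) / 2). periodization \<rho> w = 1 * \<rho> (1 *\<^sub>R w + (- nearest_lattice x))"
    using periodization_eq_near[OF assms(1,3)] by (auto simp: dist_commute)
  ultimately show "\<exists>r>0. \<exists>h Dh. has_partial h i Dh \<and> (\<forall>w\<in>ball x r. periodization \<rho> w = h w)
      \<and> periodization D x = Dh x"
    using assms(3) by (intro exI[of _ "(1/2 - s) / 2"]) (auto simp: periodization_def)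
qed

lemma tdist_add_lattice_vec: "tdist x (y + lattice_vec k) = tdist x y"
proof -
  have "(\<lambda>j. norm (x - (y + lattice_vec k) - lattice_vec j)) = (\<lambda>j. norm (x - y - lattice_vec j)) \<circ> (+) k"
    by (auto simp: lattice_vec_add algebra_simps)
  then show ?thesis unfolding tdist_def by (simp only: image_comp[symmetric] surj_plus)
qed

lemma tdist_le: "tdist x y \<le> norm (x - y - lattice_vec k)"
  unfolding tdist_def by (rule cInf_lower) (auto intro: bdd_belowI[where m=0])

lemma tdist_nonneg: "0 \<le> tdist x y"
  unfolding tdist_def by (rule cInf_greatest) auto

lemma tdist_triangle: "tdist x y \<le> tdist x y' + norm (y - y')"
proof -
  have "tdist x y - norm (y - y') \<le> tdist x y'"
    unfolding tdist_def[of x y']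
  proof (rule cInf_greatest)
    fix z assume "z \<in> range (\<lambda>k. norm (x - y' - lattice_vec k))"
    then obtain k where z: "z = norm (x - y' - lattice_vec k)" by auto
    have "tdist x y \<le> norm (x - y' - lattice_vec k + (y' - y))"
      using tdist_le[of x y k] by (simp add: algebra_simps)
    also have "\<dots> \<le> z + norm (y - y')"
      using norm_triangle_ineq[of "x - y' - lattice_vec k" "y' - y"] z by (simp add: norm_minus_commute)
    finally show "tdist x y - norm (y - y') \<le> z" by simp
  qed simp
  then show ?thesis by simp
qed

lemma tdist_borel_measurable [measurable]: "tdist x \<in> borel_measurable borel"
proof -
  have "\<bar>tdist x y - tdist x y'\<bar> \<le> dist y y'" for y y'
    using tdist_triangle[of x y y'] tdist_triangle[of x y' y]
    by (simp add: dist_norm norm_minus_commute abs_le_iff)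
  then have "lipschitz_on 1 UNIV (tdist x)"
    by (intro lipschitz_onI) (auto simp: dist_real_def)
  then show ?thesis
    using lipschitz_on_continuous_on borel_measurable_continuous_onI by blast
qed

lemma tdist_eq_norm:
  assumes "\<And>i. \<bar>h $ i\<bar> \<le> 1/2"
  shows "tdist x (x + h) = norm h"
  unfolding tdist_def
proof (rule cInf_eq_minimum)
  show "norm h \<in> range (\<lambda>k. norm (x - (x + h) - lattice_vec k))"
    by (rule range_eqI[where x=0]) simp
  fix z assume "z \<in> range (\<lambda>k. norm (x - (x + h) - lattice_vec k))"
  then obtain k where z: "z = norm (x - (x + h) - lattice_vec k)" by auto
  have "\<bar>h $ i\<bar> \<le> \<bar>(x - (x + h) - lattice_vec k) $ i\<bar>" for i
  proof (cases "k $ i = 0")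
    case False
    then have "1 \<le> \<bar>real_of_int (k $ i)\<bar>" by linarith
    then show ?thesis using assms[of i] by simp
  qed simp
  then show "norm h \<le> z" unfolding z norm_vec_def by (intro L2_set_mono) auto
qed

lemma integral_mult_squared_le:
  fixes f u :: "'a \<Rightarrow> real"
  assumes [measurable]: "f \<in> borel_measurable M" "u \<in> borel_measurable M"
    and "integrable M u" "integrable M (\<lambda>x. (f x)\<^sup>2 * \<bar>u x\<bar>)"
  shows "(\<integral>x. f x * u x \<partial>M)\<^sup>2 \<le> (\<integral>x. \<bar>u x\<bar> \<partial>M) * (\<integral>x. (f x)\<^sup>2 * \<bar>u x\<bar> \<partial>M)"
proof -
  define F G where "F x = ennreal (\<bar>f x\<bar> * sqrt \<bar>u x\<bar>)" and "G x = ennreal (sqrt \<bar>u x\<bar>)" for x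
  have [measurable]: "F \<in> borel_measurable M" "G \<in> borel_measurable M"
    unfolding F_def G_def by measurable
  have FG: "F x * G x = ennreal (norm (f x * u x))" for x
    by (simp add: F_def G_def ennreal_mult''[symmetric] abs_mult mult.assoc)
  have F2: "F x ^ 2 = ennreal ((f x)\<^sup>2 * \<bar>u x\<bar>)" and G2: "G x ^ 2 = ennreal \<bar>u x\<bar>" for x
    by (simp_all add: F_def G_def ennreal_power power_mult_distrib)
  \<comment> \<open>No integrability of \<open>f * u\<close> is needed: otherwise its Bochner integral is \<open>0\<close>.\<close>
  have "ennreal \<bar>\<integral>x. f x * u x \<partial>M\<bar> \<le> (\<integral>\<^sup>+x. F x * G x \<partial>M)"
  proof (cases "integrable M (\<lambda>x. f x * u x)")
    case True
    from integral_norm_bound_ennreal[OF True] show ?thesis by (simp add: FG)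
  qed (simp add: not_integrable_integral_eq)
  then have "ennreal \<bar>\<integral>x. f x * u x \<partial>M\<bar> ^ 2 \<le> (\<integral>\<^sup>+x. F x * G x \<partial>M)\<^sup>2"
    by (rule power_mono) simp
  then have "ennreal ((\<integral>x. f x * u x \<partial>M)\<^sup>2) \<le> (\<integral>\<^sup>+x. F x * G x \<partial>M)\<^sup>2"
    by (simp add: ennreal_power)
  also have "\<dots> \<le> (\<integral>\<^sup>+x. F x ^ 2 \<partial>M) * (\<integral>\<^sup>+x. G x ^ 2 \<partial>M)"
    by (rule Cauchy_Schwarz_nn_integral) measurable
  also have "\<dots> = ennreal (\<integral>x. (f x)\<^sup>2 * \<bar>u x\<bar> \<partial>M) * ennreal (\<integral>x. \<bar>u x\<bar> \<partial>M)"
    unfolding F2 G2 using assms(3,4) by (simp add: nn_integral_eq_integral)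
  also have "\<dots> = ennreal ((\<integral>x. \<bar>u x\<bar> \<partial>M) * (\<integral>x. (f x)\<^sup>2 * \<bar>u x\<bar> \<partial>M))"
    by (simp add: ennreal_mult''[symmetric] mult.commute)
  finally show ?thesis
    by (simp add: ennreal_le_iff integral_nonneg_AE)
qed

lemma borel_measurable_vec_nth [measurable (raw)]:
  fixes f :: "'a \<Rightarrow> real^'n"
  shows "f \<in> borel_measurable M \<Longrightarrow> (\<lambda>x. f x $ i) \<in> borel_measurable M"
  by (rule measurable_compose[OF _ borel_measurable_continuous_onI]) (auto intro: continuous_on_component)

lemma power2_norm_vec: "(norm (v::real^'n))\<^sup>2 = (\<Sum>i\<in>UNIV. (v $ i)\<^sup>2)"
  by (simp add: norm_vec_def L2_set_def sum_nonneg)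

lemma abs_le_1_plus_power2: "\<bar>a :: real\<bar> \<le> 1 + a\<^sup>2"
proof -
  have "0 \<le> (\<bar>a\<bar> - 1)\<^sup>2" by simp
  then show ?thesis by (simp add: power2_eq_square algebra_simps abs_mult_self_eq)
qed

lemma power2_vec_nth_le_power2_norm: "((v::real^'n) $ i)\<^sup>2 \<le> (norm v)\<^sup>2"
  using component_le_norm_cart[of v i] by (metis abs_ge_zero power2_abs power_mono)

lemma integrable_weighted_vec_nth:
  fixes d :: "'a \<Rightarrow> real^'n" and w :: "'a \<Rightarrow> real"
  assumes [measurable]: "d \<in> borel_measurable M" and w: "\<And>x. 0 \<le> w x" "integrable M w"
    and int: "integrable M (\<lambda>x. w x * (norm (d x))\<^sup>2)"
  shows "integrable M (\<lambda>x. (d x $ i)\<^sup>2 * w x)" "integrable M (\<lambda>x. w x * d x $ i)"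
proof -
  have [measurable]: "w \<in> borel_measurable M" using w(2) by (rule borel_measurable_integrable)
  show "integrable M (\<lambda>x. (d x $ i)\<^sup>2 * w x)"
  proof (rule Bochner_Integration.integrable_bound[OF int])
    have "(d x $ i)\<^sup>2 * w x \<le> w x * (norm (d x))\<^sup>2" for x
      using mult_left_mono[OF power2_vec_nth_le_power2_norm w(1)] by (simp add: mult.commute)
    then show "AE x in M. norm ((d x $ i)\<^sup>2 * w x) \<le> norm (w x * (norm (d x))\<^sup>2)"
      using w(1) by (intro AE_I2) (simp add: abs_mult)
  qed measurable
  show "integrable M (\<lambda>x. w x * d x $ i)"
  proof (rule Bochner_Integration.integrable_bound[OF Bochner_Integration.integrable_add[OF w(2) int]])
    have "\<bar>w x * d x $ i\<bar> \<le> w x * (1 + (norm (d x))\<^sup>2)" for x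
      using abs_le_1_plus_power2[of "d x $ i"] power2_vec_nth_le_power2_norm[of "d x" i] w(1)[of x]
      by (simp add: abs_mult mult_left_mono)
    then show "AE x in M. norm (w x * d x $ i) \<le> norm (w x + w x * (norm (d x))\<^sup>2)"
      using w(1) by (intro AE_I2) (simp add: distrib_left)
  qed measurable
qed

lemma set_integrable_mult_bounded:
  fixes F k :: "'a \<Rightarrow> real"
  assumes "set_integrable M A F" "F \<in> borel_measurable M" "k \<in> borel_measurable M"
    "A \<in> sets M" "\<And>x. \<bar>k x\<bar> \<le> B"
  shows "set_integrable M A (\<lambda>x. F x * k x)"
  unfolding set_integrable_def
proof (rule Bochner_Integration.integrable_bound)
  show "integrable M (\<lambda>x. B * (indicator A x *\<^sub>R F x))"
    using assms(1) by (simp add: set_integrable_def)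
  have "0 \<le> B" using assms(5) by (meson abs_ge_zero order_trans)
  moreover have "\<bar>F x\<bar> * \<bar>k x\<bar> \<le> B * \<bar>F x\<bar>" for x
    using mult_left_mono[OF assms(5)[of x] abs_ge_zero[of "F x"]] by (simp add: mult.commute)
  ultimately show "AE x in M. norm (indicator A x *\<^sub>R (F x * k x)) \<le> norm (B * (indicator A x *\<^sub>R F x))"
    by (intro AE_I2) (simp add: abs_mult indicator_def)
qed (use assms(2-4) in measurable)

lemma set_integrable_torus_cube_1: "set_integrable lborel (torus_cube :: (real^'n) set) (\<lambda>_. 1 :: real)"
  unfolding set_integrable_def using emeasure_torus_cube_finite by (simp add: integrable_indicator_iff)

lemma nn_integral_eq_set_integral:
  fixes F :: "'a \<Rightarrow> real"
  assumes "set_integrable M A F" "\<And>x. 0 \<le> F x"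
  shows "(\<integral>\<^sup>+x\<in>A. ennreal (F x) \<partial>M) = ennreal (LINT x:A|M. F x)"
proof -
  have "(\<integral>\<^sup>+x\<in>A. ennreal (F x) \<partial>M) = (\<integral>\<^sup>+x. ennreal (indicator A x *\<^sub>R F x) \<partial>M)"
    by (intro nn_integral_cong) (simp add: indicator_def)
  also have "\<dots> = ennreal (LINT x:A|M. F x)"
    unfolding set_lebesgue_integral_def
    using assms by (intro nn_integral_eq_integral) (auto simp: set_integrable_def)
  finally show ?thesis .
qed

lemma compact_support_bounded:
  fixes f :: "real^'n \<Rightarrow> real"
  assumes "continuous_on UNIV f" "\<And>v. 1 < norm v \<Longrightarrow> f v = 0"
  obtains B where "\<And>v. \<bar>f v\<bar> \<le> B"
proof -
  have "compact (f ` cball 0 1)"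
    by (rule compact_continuous_image) (use assms(1) continuous_on_subset in auto)
  then obtain a where a: "\<forall>y\<in>f ` cball 0 1. norm y \<le> a"
    using compact_imp_bounded bounded_iff by metis
  have "\<bar>f v\<bar> \<le> max a 0" for v
    using a assms(2)[of v] by (cases "norm v \<le> 1") force+
  then show ?thesis using that by blast
qed

lemma compact_support_integrable:
  fixes f :: "real^'n \<Rightarrow> real"
  assumes "continuous_on UNIV f" "\<And>v. 1 < norm v \<Longrightarrow> f v = 0"
  shows "integrable lborel f"
proof -
  have "integrable lborel (\<lambda>x. indicator (cball 0 1) x *\<^sub>R f x)"
    by (rule borel_integrable_compact) (use assms(1) continuous_on_subset in auto)
  moreover have "(\<lambda>x. indicator (cball 0 1) x *\<^sub>R f x) = f"
  proof
    fix x
    show "indicator (cball 0 1) x *\<^sub>R f x = f x"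
      using assms(2)[of x] by (cases "norm x \<le> 1") (auto simp: indicator_def)
  qed
  ultimately show ?thesis by simp
qed

lemma sum_ennreal_mult_self_mult:
  assumes "\<And>i. 0 \<le> c i"
  shows "(\<Sum>i\<in>I. ennreal (c i) * (ennreal (c i) * L)) = ennreal (\<Sum>i\<in>I. (c i)\<^sup>2) * L"
proof -
  have "ennreal (c i) * (ennreal (c i) * L) = ennreal ((c i)\<^sup>2) * L" for i
    using assms by (simp add: power2_eq_square ennreal_mult mult.assoc)
  then show ?thesis using assms by (simp add: sum_distrib_right[symmetric])
qed

section \<open>Rescaled mollifiers\<close>

locale mollifier =
  fixes \<Omega> :: "real^'n \<Rightarrow> real"
  assumes smooth_\<Omega>: "smooth \<Omega>" and \<Omega>_nonneg: "\<And>v. 0 \<le> \<Omega> v"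
    and \<Omega>_vanishes: "\<And>v. 1 < norm v \<Longrightarrow> \<Omega> v = 0"
    and integral_\<Omega>: "integral\<^sup>L lborel \<Omega> = 1"
begin

definition \<Omega>_partial :: "'n \<Rightarrow> real^'n \<Rightarrow> real" where
  "\<Omega>_partial i = (SOME D. has_partial \<Omega> i D \<and> smooth D)"

lemma has_partial_\<Omega>: "has_partial \<Omega> i (\<Omega>_partial i)" and smooth_\<Omega>_partial: "smooth (\<Omega>_partial i)"
proof -
  have "\<exists>D. has_partial \<Omega> i D \<and> smooth D" using smooth_has_partial[OF smooth_\<Omega>] by metis
  then have "has_partial \<Omega> i (\<Omega>_partial i) \<and> smooth (\<Omega>_partial i)"
    unfolding \<Omega>_partial_def by (rule someI_ex)
  then show "has_partial \<Omega> i (\<Omega>_partial i)" "smooth (\<Omega>_partial i)" by auto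
qed

lemma \<Omega>_partial_vanishes: "1 < norm v \<Longrightarrow> \<Omega>_partial i v = 0"
  using has_partial_eq_0_outside[OF has_partial_\<Omega>] \<Omega>_vanishes by blast

definition \<Omega>_partial_L1 :: "'n \<Rightarrow> real" where
  "\<Omega>_partial_L1 i = (LINT v|lborel. \<bar>\<Omega>_partial i v\<bar>)"

lemma \<Omega>_partial_L1_nonneg: "0 \<le> \<Omega>_partial_L1 i"
  unfolding \<Omega>_partial_L1_def by simp

lemma \<Omega>_borel_measurable [measurable]: "\<Omega> \<in> borel_measurable borel"
  by (rule smooth_imp_borel_measurable[OF smooth_\<Omega>])

lemma \<Omega>_partial_borel_measurable [measurable]: "\<Omega>_partial i \<in> borel_measurable borel"
  by (rule smooth_imp_borel_measurable[OF smooth_\<Omega>_partial])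

lemma integrable_\<Omega>: "integrable lborel \<Omega>"
  using compact_support_integrable[OF smooth_imp_continuous[OF smooth_\<Omega>] \<Omega>_vanishes] .

lemma nn_integral_\<Omega>: "(\<integral>\<^sup>+v. ennreal (\<Omega> v) \<partial>lborel) = 1"
  using nn_integral_eq_integral[OF integrable_\<Omega>] \<Omega>_nonneg integral_\<Omega> by simp

lemma nn_integral_abs_\<Omega>_partial:
  "(\<integral>\<^sup>+v. ennreal \<bar>\<Omega>_partial i v\<bar> \<partial>lborel) = ennreal (\<Omega>_partial_L1 i)"
  unfolding \<Omega>_partial_L1_def
  using compact_support_integrable[OF smooth_imp_continuous[OF smooth_\<Omega>_partial] \<Omega>_partial_vanishes]
  by (intro nn_integral_eq_integral integrable_abs) auto

text \<open>The \<open>+ 0\<close> below puts the rescaled kernel and its partial derivatives in the shape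
  required by \<open>smooth_affine\<close> and \<open>has_partial_affine\<close>.\<close>

definition \<rho> :: "real \<Rightarrow> real^'n \<Rightarrow> real" where
  "\<rho> \<delta> v = (1 / \<delta> ^ CARD('n)) * \<Omega> ((1 / \<delta>) *\<^sub>R v + 0)"

definition \<rho>_partial :: "real \<Rightarrow> 'n \<Rightarrow> real^'n \<Rightarrow> real" where
  "\<rho>_partial \<delta> i v = ((1 / \<delta> ^ CARD('n)) * (1 / \<delta>)) * \<Omega>_partial i ((1 / \<delta>) *\<^sub>R v + 0)"

lemma \<rho>_nonneg: "0 < \<delta> \<Longrightarrow> 0 \<le> \<rho> \<delta> v"
  unfolding \<rho>_def using \<Omega>_nonneg by simp

lemma \<rho>_vanishes: "0 < \<delta> \<Longrightarrow> \<delta> < norm v \<Longrightarrow> \<rho> \<delta> v = 0"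
  unfolding \<rho>_def using \<Omega>_vanishes[of "(1 / \<delta>) *\<^sub>R v"] by (simp add: field_simps)

lemma \<rho>_partial_vanishes: "0 < \<delta> \<Longrightarrow> \<delta> < norm v \<Longrightarrow> \<rho>_partial \<delta> i v = 0"
  unfolding \<rho>_partial_def using \<Omega>_partial_vanishes[of "(1 / \<delta>) *\<^sub>R v"] by (simp add: field_simps)

lemma smooth_\<rho>: "smooth (\<rho> \<delta>)"
  unfolding \<rho>_def[abs_def] by (rule smooth_affine[OF smooth_\<Omega>])

lemma smooth_\<rho>_partial: "smooth (\<rho>_partial \<delta> i)"
  unfolding \<rho>_partial_def[abs_def] by (rule smooth_affine[OF smooth_\<Omega>_partial])

lemma has_partial_\<rho>: "has_partial (\<rho> \<delta>) i (\<rho>_partial \<delta> i)"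
  unfolding \<rho>_def[abs_def] \<rho>_partial_def[abs_def] by (rule has_partial_affine[OF has_partial_\<Omega>])

lemma \<rho>_borel_measurable [measurable]: "\<rho> \<delta> \<in> borel_measurable borel"
  by (rule smooth_imp_borel_measurable[OF smooth_\<rho>])

lemma \<rho>_partial_borel_measurable [measurable]: "\<rho>_partial \<delta> i \<in> borel_measurable borel"
  by (rule smooth_imp_borel_measurable[OF smooth_\<rho>_partial])

lemma \<rho>_partial_bounded:
  obtains B where "\<And>v. \<bar>\<rho>_partial \<delta> i v\<bar> \<le> B"
proof -
  obtain B where "\<And>v. \<bar>\<Omega>_partial i v\<bar> \<le> B"
    using compact_support_bounded[OF smooth_imp_continuous[OF smooth_\<Omega>_partial[of i]]]
      \<Omega>_partial_vanishes[of _ i] by blast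
  then have "\<bar>\<rho>_partial \<delta> i v\<bar> \<le> \<bar>1 / \<delta> ^ CARD('n) * (1 / \<delta>)\<bar> * B" for v
    unfolding \<rho>_partial_def abs_mult[of _ "\<Omega>_partial i _"] by (rule mult_left_mono) simp
  then show ?thesis using that by blast
qed

lemma \<rho>_bounded:
  obtains B where "\<And>v. \<bar>\<rho> \<delta> v\<bar> \<le> B"
proof -
  obtain B where "\<And>v. \<bar>\<Omega> v\<bar> \<le> B"
    using compact_support_bounded[OF smooth_imp_continuous[OF smooth_\<Omega>] \<Omega>_vanishes] by blast
  then have "\<bar>\<rho> \<delta> v\<bar> \<le> \<bar>1 / \<delta> ^ CARD('n)\<bar> * B" for v
    unfolding \<rho>_def abs_mult by (rule mult_left_mono) simp
  then show ?thesis using that by blast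
qed

lemma nn_integral_\<rho>:
  assumes "0 < \<delta>"
  shows "(\<integral>\<^sup>+v. ennreal (\<rho> \<delta> v) \<partial>lborel) = 1"
proof -
  have "(\<integral>\<^sup>+v. ennreal (\<rho> \<delta> v) \<partial>lborel)
      = ennreal (\<bar>\<delta>\<bar> ^ CARD('n)) * (\<integral>\<^sup>+x. ennreal (\<rho> \<delta> (0 + \<delta> *\<^sub>R x)) \<partial>lborel)"
    by (rule nn_integral_lborel_affine) (use assms in auto)
  also have "(\<lambda>x. ennreal (\<rho> \<delta> (0 + \<delta> *\<^sub>R x))) = (\<lambda>x. ennreal (1 / \<delta> ^ CARD('n)) * ennreal (\<Omega> x))"
    using assms by (intro ext) (simp add: \<rho>_def ennreal_mult'[symmetric])
  also have "ennreal (\<bar>\<delta>\<bar> ^ CARD('n)) * (\<integral>\<^sup>+x. ennreal (1 / \<delta> ^ CARD('n)) * ennreal (\<Omega> x) \<partial>lborel) = 1"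
    using assms by (subst nn_integral_cmult) (auto simp: nn_integral_\<Omega> ennreal_mult[symmetric])
  finally show ?thesis .
qed

lemma nn_integral_abs_\<rho>_partial:
  assumes "0 < \<delta>"
  shows "(\<integral>\<^sup>+v. ennreal \<bar>\<rho>_partial \<delta> i v\<bar> \<partial>lborel) = ennreal (\<Omega>_partial_L1 i / \<delta>)"
proof -
  have "(\<integral>\<^sup>+v. ennreal \<bar>\<rho>_partial \<delta> i v\<bar> \<partial>lborel)
      = ennreal (\<bar>\<delta>\<bar> ^ CARD('n)) * (\<integral>\<^sup>+x. ennreal \<bar>\<rho>_partial \<delta> i (0 + \<delta> *\<^sub>R x)\<bar> \<partial>lborel)"
    by (rule nn_integral_lborel_affine) (use assms in auto)
  also have "(\<lambda>x. ennreal \<bar>\<rho>_partial \<delta> i (0 + \<delta> *\<^sub>R x)\<bar>)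
      = (\<lambda>x. ennreal (1 / \<delta> ^ CARD('n) * (1 / \<delta>)) * ennreal \<bar>\<Omega>_partial i x\<bar>)"
    using assms by (intro ext) (simp add: \<rho>_partial_def ennreal_mult'[symmetric] abs_mult)
  also have "ennreal (\<bar>\<delta>\<bar> ^ CARD('n))
      * (\<integral>\<^sup>+x. ennreal (1 / \<delta> ^ CARD('n) * (1 / \<delta>)) * ennreal \<bar>\<Omega>_partial i x\<bar> \<partial>lborel)
      = ennreal (\<Omega>_partial_L1 i / \<delta>)"
    using assms \<Omega>_partial_L1_nonneg[of i]
    by (subst nn_integral_cmult)
       (auto simp: nn_integral_abs_\<Omega>_partial ennreal_mult[symmetric] mult.assoc[symmetric])
  finally show ?thesis .
qed

lemma integrable_\<rho>: "0 < \<delta> \<Longrightarrow> integrable lborel (\<rho> \<delta>)"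
  unfolding integrable_iff_bounded using nn_integral_\<rho> \<rho>_nonneg by simp

lemma integral_\<rho>: "0 < \<delta> \<Longrightarrow> (LINT h|lborel. \<rho> \<delta> h) = 1"
  using integral_eq_nn_integral[of "\<rho> \<delta>" lborel] nn_integral_\<rho> \<rho>_nonneg by simp

lemma suminf_lattice_add_\<rho>:
  assumes "0 < \<delta>" "\<delta> < 1/2"
  shows "(\<Sum>n. ennreal (\<rho> \<delta> (w + lattice_vec (lattice_enum n)))) = ennreal (periodization (\<rho> \<delta>) w)"
  using assms \<rho>_vanishes[OF assms(1)] by (intro suminf_lattice_add_eq_periodization[of \<delta>])

lemma suminf_lattice_add_abs_\<rho>_partial:
  assumes "0 < \<delta>" "\<delta> < 1/2"
  shows "(\<Sum>n. ennreal \<bar>\<rho>_partial \<delta> i (w + lattice_vec (lattice_enum n))\<bar>)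
       = ennreal \<bar>periodization (\<rho>_partial \<delta> i) w\<bar>"
proof -
  have "(\<Sum>n. ennreal \<bar>\<rho>_partial \<delta> i (w + lattice_vec (lattice_enum n))\<bar>)
      = ennreal (periodization (\<lambda>v. \<bar>\<rho>_partial \<delta> i v\<bar>) w)"
    using assms \<rho>_partial_vanishes[OF assms(1)] by (intro suminf_lattice_add_eq_periodization[of \<delta>]) auto
  then show ?thesis by (simp only: periodization_def)
qed

lemma suminf_lattice_diff_abs_\<rho>_partial:
  assumes "0 < \<delta>" "\<delta> < 1/2"
  shows "(\<Sum>n. ennreal \<bar>\<rho>_partial \<delta> i (w - lattice_vec (lattice_enum n))\<bar>)
       = ennreal \<bar>periodization (\<rho>_partial \<delta> i) w\<bar>"
proof -
  have "(\<Sum>n. ennreal \<bar>\<rho>_partial \<delta> i (w - lattice_vec (lattice_enum n))\<bar>)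
      = ennreal (periodization (\<lambda>v. \<bar>\<rho>_partial \<delta> i v\<bar>) w)"
    using assms \<rho>_partial_vanishes[OF assms(1)] by (intro suminf_lattice_diff_eq_periodization[of \<delta>]) auto
  then show ?thesis by (simp only: periodization_def)
qed

lemma smooth_periodization_\<rho>: "0 < \<delta> \<Longrightarrow> \<delta> < 1/2 \<Longrightarrow> smooth (periodization (\<rho> \<delta>))"
  by (rule smooth_periodization[of \<delta>]) (auto simp: \<rho>_vanishes smooth_\<rho>)

lemma has_partial_periodization_\<rho>:
  "0 < \<delta> \<Longrightarrow> \<delta> < 1/2 \<Longrightarrow> has_partial (periodization (\<rho> \<delta>)) i (periodization (\<rho>_partial \<delta> i))"
  by (rule has_partial_periodization[of \<delta>]) (auto simp: \<rho>_vanishes \<rho>_partial_vanishes has_partial_\<rho>)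

lemma periodization_\<rho>_borel_measurable:
  "0 < \<delta> \<Longrightarrow> \<delta> < 1/2 \<Longrightarrow> periodization (\<rho> \<delta>) \<in> borel_measurable borel"
  using smooth_periodization_\<rho> smooth_imp_borel_measurable by blast

lemma periodization_\<rho>_partial_borel_measurable:
  "0 < \<delta> \<Longrightarrow> \<delta> < 1/2 \<Longrightarrow> periodization (\<rho>_partial \<delta> i) \<in> borel_measurable borel"
  by (intro smooth_imp_borel_measurable smooth_periodization[of \<delta>])
     (auto simp: \<rho>_partial_vanishes smooth_\<rho>_partial)

end

lemma H1_weak_gradD:
  assumes "H1_weak_grad f g"
  shows "\<And>y k. f (y + lattice_vec k) = f y" "\<And>y k. g (y + lattice_vec k) = g y"
    "f \<in> borel_measurable borel" "g \<in> borel_measurable borel"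
    "set_integrable lborel torus_cube (\<lambda>x. (f x)\<^sup>2)"
    "set_integrable lborel torus_cube (\<lambda>x. (norm (g x))\<^sup>2)"
    "\<And>\<phi> i D. smooth \<phi> \<Longrightarrow> periodic \<phi> \<Longrightarrow> has_partial \<phi> i D \<Longrightarrow>
        (LINT x:torus_cube|lborel. f x * D x) = - (LINT x:torus_cube|lborel. g x $ i * \<phi> x)"
  using assms unfolding H1_weak_grad_def periodic_def by auto

lemma ennreal_L2_sq:
  "H1_weak_grad f g \<Longrightarrow> ennreal (L2_sq f) = (\<integral>\<^sup>+y\<in>torus_cube. ennreal ((f y)\<^sup>2) \<partial>lborel)"
  unfolding L2_sq_def using nn_integral_eq_set_integral H1_weak_gradD(5) by fastforce

lemma L2_sq_nonneg: "0 \<le> L2_sq f"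
  unfolding L2_sq_def set_lebesgue_integral_def by (auto intro!: integral_nonneg_AE)

lemma ennreal_H1_sq:
  assumes "H1_weak_grad f g"
  shows "ennreal (H1_sq f g) = (\<integral>\<^sup>+y\<in>torus_cube. ennreal ((f y)\<^sup>2) \<partial>lborel)
      + (\<integral>\<^sup>+y\<in>torus_cube. ennreal ((norm (g y))\<^sup>2) \<partial>lborel)"
proof -
  have "0 \<le> L2_sq f" "0 \<le> (LINT x:torus_cube|lborel. (norm (g x))\<^sup>2)"
    unfolding L2_sq_def set_lebesgue_integral_def by (auto intro!: integral_nonneg_AE)
  then show ?thesis
    using assms ennreal_L2_sq nn_integral_eq_set_integral[OF H1_weak_gradD(6)[OF assms]]
    by (simp add: H1_sq_def ennreal_plus)
qed

section \<open>The shift energy\<close>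

definition shift_energy :: "(real^'n \<Rightarrow> real^'n) \<Rightarrow> real^'n \<Rightarrow> ennreal" where
  "shift_energy g h = (\<integral>\<^sup>+x\<in>torus_cube. ennreal ((norm (g (x + h) - g x))\<^sup>2) \<partial>lborel)"

lemma shift_energy_borel_measurable [measurable]:
  assumes [measurable]: "g \<in> borel_measurable borel"
  shows "shift_energy g \<in> borel_measurable borel"
  unfolding shift_energy_def by measurable

lemma norm_diff_squared_le_telescoping:
  fixes g :: "'a::real_normed_vector \<Rightarrow> 'b::real_normed_vector"
  shows "(norm (g (x + real m *\<^sub>R h) - g x))\<^sup>2
       \<le> real m * (\<Sum>j<m. (norm (g (real j *\<^sub>R h + x + h) - g (real j *\<^sub>R h + x)))\<^sup>2)"
proof -
  have "g (x + real m *\<^sub>R h) - g x = (\<Sum>j<m. g (real j *\<^sub>R h + x + h) - g (real j *\<^sub>R h + x))"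
    using sum_lessThan_telescope[of "\<lambda>j. g (x + real j *\<^sub>R h)" m]
    by (simp add: algebra_simps)
  then have "norm (g (x + real m *\<^sub>R h) - g x) \<le> (\<Sum>j<m. norm (g (real j *\<^sub>R h + x + h) - g (real j *\<^sub>R h + x)))"
    by (simp add: norm_sum)
  then have "(norm (g (x + real m *\<^sub>R h) - g x))\<^sup>2
      \<le> (\<Sum>j<m. norm (g (real j *\<^sub>R h + x + h) - g (real j *\<^sub>R h + x)))\<^sup>2"
    by (intro power_mono) auto
  also have "\<dots> \<le> (\<Sum>j<m. (norm (g (real j *\<^sub>R h + x + h) - g (real j *\<^sub>R h + x)))\<^sup>2) * real (card {..<m})"
    by (rule sum_squared_le_sum_of_squares)
  finally show ?thesis by (simp add: mult.commute)
qed

lemma shift_energy_scale_le: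
  fixes g :: "real^'n \<Rightarrow> real^'n"
  assumes [measurable]: "g \<in> borel_measurable borel" and g: "\<And>y k. g (y + lattice_vec k) = g y"
  shows "shift_energy g (real m *\<^sub>R h) \<le> ennreal ((real m)\<^sup>2) * shift_energy g h"
proof -
  let ?t = "\<lambda>j x. ennreal ((norm (g (real j *\<^sub>R h + x + h) - g (real j *\<^sub>R h + x)))\<^sup>2)"
  have translate: "(\<integral>\<^sup>+x\<in>torus_cube. ?t j x \<partial>lborel) = shift_energy g h" for j
    unfolding shift_energy_def
  proof (rule nn_integral_torus_cube_translate[where H="\<lambda>y. ennreal ((norm (g (y + h) - g y))\<^sup>2)"])
    fix y k
    have "y + lattice_vec k + h = (y + h) + lattice_vec k" by (simp add: algebra_simps)
    then show "ennreal ((norm (g (y + lattice_vec k + h) - g (y + lattice_vec k)))\<^sup>2)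
        = ennreal ((norm (g (y + h) - g y))\<^sup>2)"
      by (simp only: g)
  qed simp
  have "ennreal ((norm (g (x + real m *\<^sub>R h) - g x))\<^sup>2) \<le> ennreal (real m) * (\<Sum>j<m. ?t j x)" for x
  proof -
    have "ennreal ((norm (g (x + real m *\<^sub>R h) - g x))\<^sup>2)
        \<le> ennreal (real m * (\<Sum>j<m. (norm (g (real j *\<^sub>R h + x + h) - g (real j *\<^sub>R h + x)))\<^sup>2))"
      by (rule ennreal_leI) (rule norm_diff_squared_le_telescoping)
    then show ?thesis by (simp add: ennreal_mult sum_nonneg sum_ennreal)
  qed
  then have "shift_energy g (real m *\<^sub>R h) \<le> (\<integral>\<^sup>+x\<in>torus_cube. ennreal (real m) * (\<Sum>j<m. ?t j x) \<partial>lborel)"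
    unfolding shift_energy_def by (intro nn_integral_mono mult_right_mono) auto
  also have "\<dots> = (\<integral>\<^sup>+x. ennreal (real m) * (\<Sum>j<m. ?t j x * indicator torus_cube x) \<partial>lborel)"
    by (simp only: sum_distrib_right mult.assoc)
  also have "\<dots> = ennreal (real m) * (\<Sum>j<m. \<integral>\<^sup>+x\<in>torus_cube. ?t j x \<partial>lborel)"
    by (subst nn_integral_sum[symmetric]) (measurable, rule nn_integral_cmult, measurable)
  also have "\<dots> = ennreal ((real m)\<^sup>2) * shift_energy g h"
    by (simp only: translate sum_constant card_lessThan)
       (simp add: power2_eq_square ennreal_mult ennreal_of_nat_eq_real_of_nat mult.assoc)
  finally show ?thesis .
qed

context mollifier
begin

lemma mollified_shift_energy_scale_le:
  fixes g :: "real^'n \<Rightarrow> real^'n"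
  assumes [measurable]: "g \<in> borel_measurable borel" and g: "\<And>y k. g (y + lattice_vec k) = g y"
    and "1 \<le> m" "0 < \<epsilon>"
  shows "(\<integral>\<^sup>+h. ennreal (\<rho> (real m * \<epsilon>) h) * shift_energy g h \<partial>lborel)
       \<le> ennreal ((real m)\<^sup>2) * (\<integral>\<^sup>+h. ennreal (\<rho> \<epsilon> h) * shift_energy g h \<partial>lborel)"
proof -
  have rescale: "ennreal (real m ^ CARD('n)) * ennreal (\<rho> (real m * \<epsilon>) (real m *\<^sub>R u)) = ennreal (\<rho> \<epsilon> u)" for u
  proof -
    have "real m ^ CARD('n) * \<rho> (real m * \<epsilon>) (real m *\<^sub>R u) = \<rho> \<epsilon> u"
      using assms(3,4) by (simp add: \<rho>_def power_mult_distrib field_simps)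
    moreover have "0 \<le> \<rho> (real m * \<epsilon>) (real m *\<^sub>R u)"
      using assms(3,4) by (intro \<rho>_nonneg) simp
    ultimately show ?thesis by (simp add: ennreal_mult[symmetric])
  qed
  have "(\<integral>\<^sup>+h. ennreal (\<rho> (real m * \<epsilon>) h) * shift_energy g h \<partial>lborel)
      = ennreal (\<bar>real m\<bar> ^ CARD('n))
        * (\<integral>\<^sup>+u. ennreal (\<rho> (real m * \<epsilon>) (0 + real m *\<^sub>R u)) * shift_energy g (0 + real m *\<^sub>R u) \<partial>lborel)"
    using assms(3) by (intro nn_integral_lborel_affine) auto
  also have "\<dots> = (\<integral>\<^sup>+u. ennreal (\<rho> \<epsilon> u) * shift_energy g (real m *\<^sub>R u) \<partial>lborel)"
    by (subst nn_integral_cmult[symmetric]) (simp_all add: rescale mult.assoc[symmetric])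
  also have "\<dots> \<le> (\<integral>\<^sup>+u. ennreal (\<rho> \<epsilon> u) * (ennreal ((real m)\<^sup>2) * shift_energy g u) \<partial>lborel)"
    by (intro nn_integral_mono mult_left_mono shift_energy_scale_le[OF assms(1) g]) auto
  also have "\<dots> = ennreal ((real m)\<^sup>2) * (\<integral>\<^sup>+h. ennreal (\<rho> \<epsilon> h) * shift_energy g h \<partial>lborel)"
    by (subst nn_integral_cmult[symmetric]) (simp_all add: mult_ac)
  finally show ?thesis .
qed

text \<open>The profile \<open>M\<close> of the radial kernel need not be measurable: along a ray from the
  origin it coincides with the measurable kernel \<open>\<rho> \<epsilon>\<close>.\<close>

lemma nonlocal_inner_eq:
  fixes g :: "real^'n \<Rightarrow> real^'n" and M :: "real \<Rightarrow> real"
  assumes [measurable]: "g \<in> borel_measurable borel" and g: "\<And>y k. g (y + lattice_vec k) = g y"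
    and \<epsilon>: "0 < \<epsilon>" "\<epsilon> < 1/2" and M: "\<And>h. M (norm h) = \<rho> \<epsilon> h"
  shows "(\<integral>\<^sup>+y\<in>torus_cube. ennreal ((norm (g x - g y))\<^sup>2 / \<epsilon>\<^sup>2 * M (tdist x y)) \<partial>lborel)
       = (\<integral>\<^sup>+h. ennreal (\<rho> \<epsilon> h * (norm (g (x + h) - g x))\<^sup>2 / \<epsilon>\<^sup>2) \<partial>lborel)"
proof -
  define e :: "real^'n" where "e = axis undefined 1"
  define H where "H y = ennreal ((norm (g x - g y))\<^sup>2 / \<epsilon>\<^sup>2 * \<rho> \<epsilon> (tdist x y *\<^sub>R e))" for y
  have M_ray: "M t = \<rho> \<epsilon> (t *\<^sub>R e)" if "0 \<le> t" for t
    using M[of "t *\<^sub>R e"] that by (simp add: e_def)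
  have [measurable]: "H \<in> borel_measurable borel" unfolding H_def by measurable
  have H_periodic: "H (y + lattice_vec k) = H y" for y k
    unfolding H_def by (simp add: g tdist_add_lattice_vec)
  have "(\<integral>\<^sup>+y\<in>torus_cube. H y \<partial>lborel)
      = (\<integral>\<^sup>+y. H y * indicator (half_open_cube (-1/2)) (y - x) \<partial>lborel)"
    by (subst nn_integral_periodize[where \<phi>="\<lambda>_. 1"])
       (auto simp: H_periodic suminf_indicator_half_open_cube_add)
  also have "\<dots> = (\<integral>\<^sup>+h. H (x + h) * indicator (half_open_cube (-1/2)) h \<partial>lborel)"
    by (subst nn_integral_lborel_translate[where a=x]) auto
  also have "\<dots> = (\<integral>\<^sup>+h. ennreal (\<rho> \<epsilon> h * (norm (g (x + h) - g x))\<^sup>2 / \<epsilon>\<^sup>2) \<partial>lborel)"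
  proof (intro nn_integral_cong)
    fix h :: "real^'n"
    show "H (x + h) * indicator (half_open_cube (-1/2)) h = ennreal (\<rho> \<epsilon> h * (norm (g (x + h) - g x))\<^sup>2 / \<epsilon>\<^sup>2)"
    proof (cases "h \<in> half_open_cube (-1/2)")
      case True
      then have "tdist x (x + h) = norm h" by (intro tdist_eq_norm abs_le_half_if_mem_half_open_cube)
      then show ?thesis
        using True M_ray[of "norm h"] M[of h] by (simp add: H_def norm_minus_commute mult_ac)
    next
      case False
      then have "\<epsilon> < norm h" using half_le_norm_if_not_mem_half_open_cube \<epsilon> by fastforce
      then show ?thesis using False \<rho>_vanishes \<epsilon> by simp
    qed
  qed
  finally show ?thesis by (simp add: H_def M_ray tdist_nonneg)
qed

lemma nn_integral_torus_\<rho>_shift: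
  fixes g :: "real^'n \<Rightarrow> real^'n"
  assumes [measurable]: "g \<in> borel_measurable borel" and "0 < \<delta>"
  shows "(\<integral>\<^sup>+x\<in>torus_cube. (\<integral>\<^sup>+h. ennreal (\<rho> \<delta> h * (norm (g (x + h) - g x))\<^sup>2) \<partial>lborel) \<partial>lborel)
       = (\<integral>\<^sup>+h. ennreal (\<rho> \<delta> h) * shift_energy g h \<partial>lborel)"
proof -
  have "(\<integral>\<^sup>+x\<in>torus_cube. (\<integral>\<^sup>+h. ennreal (\<rho> \<delta> h * (norm (g (x + h) - g x))\<^sup>2) \<partial>lborel) \<partial>lborel)
      = (\<integral>\<^sup>+x. (\<integral>\<^sup>+h. ennreal (\<rho> \<delta> h * (norm (g (x + h) - g x))\<^sup>2) * indicator torus_cube x \<partial>lborel) \<partial>lborel)"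
    by (intro nn_integral_cong nn_integral_multc[symmetric]) measurable
  also have "\<dots> = (\<integral>\<^sup>+h. (\<integral>\<^sup>+x.
      ennreal (\<rho> \<delta> h * (norm (g (x + h) - g x))\<^sup>2) * indicator torus_cube x \<partial>lborel) \<partial>lborel)"
    by (rule lborel_pair.Fubini'[symmetric]) measurable
  also have "\<dots> = (\<integral>\<^sup>+h. ennreal (\<rho> \<delta> h) * shift_energy g h \<partial>lborel)"
    unfolding shift_energy_def using \<rho>_nonneg[OF assms(2)]
    by (intro nn_integral_cong)
       (simp add: ennreal_mult nn_integral_cmult[symmetric] mult.assoc)
  finally show ?thesis .
qed

lemma nonlocal_energy_eq:
  fixes g :: "real^'n \<Rightarrow> real^'n" and M :: "real \<Rightarrow> real"
  assumes [measurable]: "g \<in> borel_measurable borel" and g: "\<And>y k. g (y + lattice_vec k) = g y"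
    and \<epsilon>: "0 < \<epsilon>" "\<epsilon> < 1/2" and M: "\<And>h. M (norm h) = \<rho> \<epsilon> h"
  shows "(\<integral>\<^sup>+x\<in>torus_cube. (\<integral>\<^sup>+y\<in>torus_cube.
            ennreal ((norm (g x - g y))\<^sup>2 / \<epsilon>\<^sup>2 * M (tdist x y)) \<partial>lborel) \<partial>lborel)
       = ennreal (1 / \<epsilon>\<^sup>2) * (\<integral>\<^sup>+h. ennreal (\<rho> \<epsilon> h) * shift_energy g h \<partial>lborel)"
proof -
  have inner: "(\<integral>\<^sup>+y\<in>torus_cube. ennreal ((norm (g x - g y))\<^sup>2 / \<epsilon>\<^sup>2 * M (tdist x y)) \<partial>lborel)
      = ennreal (1 / \<epsilon>\<^sup>2) * (\<integral>\<^sup>+h. ennreal (\<rho> \<epsilon> h * (norm (g (x + h) - g x))\<^sup>2) \<partial>lborel)" for x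
    unfolding nonlocal_inner_eq[OF assms]
    by (subst nn_integral_cmult[symmetric]) (simp_all add: ennreal_mult'[symmetric])
  show ?thesis
    unfolding inner nn_integral_torus_\<rho>_shift[OF assms(1,3), symmetric]
    by (subst nn_integral_cmult[symmetric]) (simp_all add: mult.assoc)
qed

end

section \<open>Mollifying the gradient\<close>

context mollifier
begin

definition mollify :: "real \<Rightarrow> (real^'n \<Rightarrow> real^'n) \<Rightarrow> 'n \<Rightarrow> real^'n \<Rightarrow> real" where
  "mollify \<delta> g i x = (LINT h|lborel. \<rho> \<delta> h * g (x + h) $ i)"

lemma diff_mollify_squared_le:
  fixes g :: "real^'n \<Rightarrow> real^'n"
  assumes [measurable]: "g \<in> borel_measurable borel" and \<delta>: "0 < \<delta>"
    and int: "integrable lborel (\<lambda>h. \<rho> \<delta> h * (norm (g (x + h) - g x))\<^sup>2)"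
  shows "(g x $ i - mollify \<delta> g i x)\<^sup>2 \<le> (LINT h|lborel. ((g (x + h) - g x) $ i)\<^sup>2 * \<rho> \<delta> h)"
proof -
  define d where "d h = g (x + h) - g x" for h
  have [measurable]: "d \<in> borel_measurable borel" unfolding d_def by measurable
  have \<rho>0: "0 \<le> \<rho> \<delta> h" for h using \<rho>_nonneg[OF \<delta>] .
  note int_d = integrable_weighted_vec_nth[of d lborel "\<rho> \<delta>", OF _ \<rho>0 integrable_\<rho>[OF \<delta>]]
  have "mollify \<delta> g i x = (LINT h|lborel. \<rho> \<delta> h * d h $ i + g x $ i * \<rho> \<delta> h)"
    unfolding mollify_def d_def by (intro Bochner_Integration.integral_cong) (simp_all add: algebra_simps)
  also have "\<dots> = (LINT h|lborel. d h $ i * \<rho> \<delta> h) + g x $ i"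
    using int_d(2) int integrable_\<rho>[OF \<delta>] integral_\<rho>[OF \<delta>] by (simp add: d_def mult.commute)
  finally have "(g x $ i - mollify \<delta> g i x)\<^sup>2 = (LINT h|lborel. d h $ i * \<rho> \<delta> h)\<^sup>2"
    by simp
  also have "\<dots> \<le> (LINT h|lborel. \<bar>\<rho> \<delta> h\<bar>) * (LINT h|lborel. (d h $ i)\<^sup>2 * \<bar>\<rho> \<delta> h\<bar>)"
    using int_d(1) int \<rho>0 integrable_\<rho>[OF \<delta>] by (intro integral_mult_squared_le) (simp_all add: d_def)
  finally show ?thesis using \<rho>0 integral_\<rho>[OF \<delta>] by (simp add: d_def)
qed

lemma sum_diff_mollify_squared_le:
  fixes g :: "real^'n \<Rightarrow> real^'n"
  assumes [measurable]: "g \<in> borel_measurable borel" and \<delta>: "0 < \<delta>"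
  shows "ennreal (\<Sum>i\<in>UNIV. (g x $ i - mollify \<delta> g i x)\<^sup>2)
       \<le> (\<integral>\<^sup>+h. ennreal (\<rho> \<delta> h * (norm (g (x + h) - g x))\<^sup>2) \<partial>lborel)"
proof (cases "(\<integral>\<^sup>+h. ennreal (\<rho> \<delta> h * (norm (g (x + h) - g x))\<^sup>2) \<partial>lborel) = \<infinity>")
  case False
  have \<rho>0: "0 \<le> \<rho> \<delta> h" for h using \<rho>_nonneg[OF \<delta>] .
  have int: "integrable lborel (\<lambda>h. \<rho> \<delta> h * (norm (g (x + h) - g x))\<^sup>2)"
    using False \<rho>0 by (simp add: integrable_iff_bounded abs_mult top.not_eq_extremum)
  note int_sq = integrable_weighted_vec_nth(1)[of "\<lambda>h. g (x + h) - g x" lborel "\<rho> \<delta>",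
    OF _ \<rho>0 integrable_\<rho>[OF \<delta>] int]
  have "(\<Sum>i\<in>UNIV. (g x $ i - mollify \<delta> g i x)\<^sup>2)
      \<le> (\<Sum>i\<in>UNIV. LINT h|lborel. ((g (x + h) - g x) $ i)\<^sup>2 * \<rho> \<delta> h)"
    by (intro sum_mono diff_mollify_squared_le[OF assms int])
  also have "\<dots> = (LINT h|lborel. (\<Sum>i\<in>UNIV. ((g (x + h) - g x) $ i)\<^sup>2 * \<rho> \<delta> h))"
    using int_sq by (intro Bochner_Integration.integral_sum[symmetric]) simp
  also have "\<dots> = (LINT h|lborel. \<rho> \<delta> h * (norm (g (x + h) - g x))\<^sup>2)"
    by (simp add: power2_norm_vec sum_distrib_left mult.commute)
  finally have "ennreal (\<Sum>i\<in>UNIV. (g x $ i - mollify \<delta> g i x)\<^sup>2)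
      \<le> ennreal (LINT h|lborel. \<rho> \<delta> h * (norm (g (x + h) - g x))\<^sup>2)"
    by (rule ennreal_leI)
  also have "\<dots> = (\<integral>\<^sup>+h. ennreal (\<rho> \<delta> h * (norm (g (x + h) - g x))\<^sup>2) \<partial>lborel)"
    using int \<rho>0 by (simp add: nn_integral_eq_integral)
  finally show ?thesis .
qed simp

lemma nn_integral_torus_abs_periodization_\<rho>_partial:
  assumes "0 < \<delta>" "\<delta> < 1/2"
  shows "(\<integral>\<^sup>+y\<in>torus_cube. ennreal \<bar>periodization (\<rho>_partial \<delta> i) (y - x)\<bar> \<partial>lborel)
       = ennreal (\<Omega>_partial_L1 i / \<delta>)"
proof -
  have "(\<integral>\<^sup>+y\<in>torus_cube. 1 * ennreal \<bar>periodization (\<rho>_partial \<delta> i) (y - x)\<bar> \<partial>lborel)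
      = (\<integral>\<^sup>+y. 1 * ennreal \<bar>\<rho>_partial \<delta> i (y - x)\<bar> \<partial>lborel)"
    by (rule nn_integral_periodize[symmetric]) (use suminf_lattice_add_abs_\<rho>_partial[OF assms] in auto)
  also have "\<dots> = (\<integral>\<^sup>+h. ennreal \<bar>\<rho>_partial \<delta> i h\<bar> \<partial>lborel)"
    by (subst nn_integral_lborel_translate[where a=x]) simp_all
  finally show ?thesis using nn_integral_abs_\<rho>_partial[OF assms(1)] by simp
qed

lemma nn_integral_torus_abs_periodization_\<rho>_partial_reflect:
  assumes "0 < \<delta>" "\<delta> < 1/2"
  shows "(\<integral>\<^sup>+x\<in>torus_cube. ennreal \<bar>periodization (\<rho>_partial \<delta> i) (y - x)\<bar> \<partial>lborel)
       = ennreal (\<Omega>_partial_L1 i / \<delta>)"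
proof -
  have "(\<integral>\<^sup>+x. ennreal \<bar>\<rho>_partial \<delta> i (y - x)\<bar> \<partial>lborel)
      = (\<integral>\<^sup>+x\<in>half_open_cube 0. (\<Sum>n. ennreal \<bar>\<rho>_partial \<delta> i ((y - x) - lattice_vec (lattice_enum n))\<bar>) \<partial>lborel)"
    by (subst nn_integral_lborel_eq_half_open_cube_suminf[where c=0]) (simp_all add: algebra_simps)
  also have "\<dots> = (\<integral>\<^sup>+x\<in>torus_cube. ennreal \<bar>periodization (\<rho>_partial \<delta> i) (y - x)\<bar> \<partial>lborel)"
    by (simp add: suminf_lattice_diff_abs_\<rho>_partial[OF assms] nn_integral_torus_cube_eq_half_open)
  finally have "(\<integral>\<^sup>+x\<in>torus_cube. ennreal \<bar>periodization (\<rho>_partial \<delta> i) (y - x)\<bar> \<partial>lborel)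
      = (\<integral>\<^sup>+x. ennreal \<bar>\<rho>_partial \<delta> i (y + (-1) *\<^sub>R x)\<bar> \<partial>lborel)"
    by simp
  also have "\<dots> = (\<integral>\<^sup>+h. ennreal \<bar>\<rho>_partial \<delta> i h\<bar> \<partial>lborel)"
    using nn_integral_lborel_affine[of "\<lambda>h. ennreal \<bar>\<rho>_partial \<delta> i h\<bar>" "-1" y] by simp
  finally show ?thesis using nn_integral_abs_\<rho>_partial[OF assms(1)] by simp
qed

lemma mollify_eq_weak_derivative:
  assumes H: "H1_weak_grad f g" and \<delta>: "0 < \<delta>" "\<delta> < 1/2"
  shows "mollify \<delta> g i x = - (LINT y:torus_cube|lborel. f y * periodization (\<rho>_partial \<delta> i) (y - x))"
proof -
  note F = H1_weak_gradD[OF H]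
  have [measurable]: "g \<in> borel_measurable borel" "periodization (\<rho> \<delta>) \<in> borel_measurable borel"
    using F(4) periodization_\<rho>_borel_measurable[OF \<delta>] by auto
  obtain B where B: "\<And>v. \<bar>\<rho> \<delta> v\<bar> \<le> B" using \<rho>_bounded by blast
  have "set_integrable lborel torus_cube (\<lambda>y. g y $ i)"
  proof (rule set_integrable_bound[OF set_integral_add(1)[OF set_integrable_torus_cube_1 F(6)]])
    have "\<bar>g y $ i\<bar> \<le> 1 + (norm (g y))\<^sup>2" for y
      using abs_le_1_plus_power2[of "g y $ i"] power2_vec_nth_le_power2_norm[of "g y" i] by linarith
    then show "AE y in lborel. y \<in> torus_cube \<longrightarrow> norm (g y $ i) \<le> norm (1 + (norm (g y))\<^sup>2)"
      by (intro AE_I2) (simp add: add_nonneg_nonneg)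
  qed (simp add: set_borel_measurable_def)
  then have int: "set_integrable lborel torus_cube (\<lambda>y. g y $ i * periodization (\<rho> \<delta>) (y - x))"
    using B by (intro set_integrable_mult_bounded abs_periodization_le) simp_all
  define \<phi> where "\<phi> y = 1 * periodization (\<rho> \<delta>) (1 *\<^sub>R y + - x)" for y
  have "smooth \<phi>"
    unfolding \<phi>_def[abs_def] by (rule smooth_affine[OF smooth_periodization_\<rho>[OF \<delta>]])
  moreover have "periodic \<phi>"
    unfolding periodic_def \<phi>_def by (simp add: diff_add_eq[symmetric])
  moreover have "has_partial \<phi> i (\<lambda>y. (1 * 1) * periodization (\<rho>_partial \<delta> i) (1 *\<^sub>R y + - x))"
    unfolding \<phi>_def[abs_def] by (rule has_partial_affine[OF has_partial_periodization_\<rho>[OF \<delta>]])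
  ultimately have weak: "(LINT y:torus_cube|lborel. f y * periodization (\<rho>_partial \<delta> i) (y - x))
      = - (LINT y:torus_cube|lborel. g y $ i * periodization (\<rho> \<delta>) (y - x))"
    using F(7) unfolding \<phi>_def by fastforce
  have "mollify \<delta> g i x = (LINT y|lborel. g y $ i * \<rho> \<delta> (y - x))"
    unfolding mollify_def by (subst integral_lborel_translate[where a=x]) (simp_all add: mult.commute)
  also have "\<dots> = (LINT y:torus_cube|lborel. g y $ i * periodization (\<rho> \<delta>) (y - x))"
    using F(2) \<rho>_nonneg[OF \<delta>(1)] periodization_nonneg[of "\<rho> \<delta>", OF \<rho>_nonneg[OF \<delta>(1)]]
      suminf_lattice_add_\<rho>[OF \<delta>] int
    by (intro set_integral_periodize) auto
  finally show ?thesis using weak by simp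
qed

lemma mollify_squared_le:
  assumes H: "H1_weak_grad f g" and \<delta>: "0 < \<delta>" "\<delta> < 1/2"
  shows "ennreal ((mollify \<delta> g i x)\<^sup>2) \<le> ennreal (\<Omega>_partial_L1 i / \<delta>)
      * (\<integral>\<^sup>+y\<in>torus_cube. ennreal ((f y)\<^sup>2 * \<bar>periodization (\<rho>_partial \<delta> i) (y - x)\<bar>) \<partial>lborel)"
proof -
  note F = H1_weak_gradD[OF H]
  define k where "k y = periodization (\<rho>_partial \<delta> i) (y - x)" for y
  define u where "u y = indicator torus_cube y * k y" for y
  have [measurable]: "periodization (\<rho>_partial \<delta> i) \<in> borel_measurable borel"
    using periodization_\<rho>_partial_borel_measurable[OF \<delta>] .
  have [measurable]: "f \<in> borel_measurable borel" "k \<in> borel_measurable borel"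
    using F(3) unfolding k_def by measurable
  obtain B where B: "\<And>v. \<bar>\<rho>_partial \<delta> i v\<bar> \<le> B" using \<rho>_partial_bounded by blast
  then have kB: "\<bar>k y\<bar> \<le> B" for y unfolding k_def by (rule abs_periodization_le)
  have int_u: "integrable lborel u"
    using set_integrable_mult_bounded[OF set_integrable_torus_cube_1, of k B] kB
    unfolding u_def[abs_def] by (simp add: set_integrable_def)
  have int_fu: "integrable lborel (\<lambda>y. (f y)\<^sup>2 * \<bar>u y\<bar>)"
    using set_integrable_mult_bounded[OF F(5), of "\<lambda>y. \<bar>k y\<bar>" B] kB
    by (simp add: u_def set_integrable_def abs_mult mult_ac)
  have "(mollify \<delta> g i x)\<^sup>2 = (LINT y|lborel. f y * u y)\<^sup>2"
    using mollify_eq_weak_derivative[OF assms]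
    by (simp add: set_lebesgue_integral_def u_def k_def mult_ac)
  also have "\<dots> \<le> (LINT y|lborel. \<bar>u y\<bar>) * (LINT y|lborel. (f y)\<^sup>2 * \<bar>u y\<bar>)"
    using int_u int_fu by (intro integral_mult_squared_le) (simp_all add: borel_measurable_integrable)
  finally have "ennreal ((mollify \<delta> g i x)\<^sup>2)
      \<le> ennreal (LINT y|lborel. \<bar>u y\<bar>) * ennreal (LINT y|lborel. (f y)\<^sup>2 * \<bar>u y\<bar>)"
    by (simp add: ennreal_leI ennreal_mult'[symmetric])
  also have "ennreal (LINT y|lborel. \<bar>u y\<bar>) = (\<integral>\<^sup>+y. ennreal \<bar>u y\<bar> \<partial>lborel)"
    using int_u by (intro nn_integral_eq_integral[symmetric]) auto
  also have "\<dots> = ennreal (\<Omega>_partial_L1 i / \<delta>)"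
    using nn_integral_torus_abs_periodization_\<rho>_partial[OF \<delta>, of i x]
    by (simp add: u_def k_def abs_mult indicator_mult_ennreal mult.commute)
  also have "ennreal (LINT y|lborel. (f y)\<^sup>2 * \<bar>u y\<bar>) = (\<integral>\<^sup>+y. ennreal ((f y)\<^sup>2 * \<bar>u y\<bar>) \<partial>lborel)"
    using int_fu by (intro nn_integral_eq_integral[symmetric]) auto
  also have "\<dots> = (\<integral>\<^sup>+y\<in>torus_cube. ennreal ((f y)\<^sup>2 * \<bar>k y\<bar>) \<partial>lborel)"
    by (simp add: u_def abs_mult indicator_mult_ennreal mult_ac)
  finally show ?thesis by (simp add: k_def)
qed

lemma norm_squared_le_mollified:
  assumes H: "H1_weak_grad f g" and \<delta>: "0 < \<delta>" "\<delta> < 1/2"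
  shows "ennreal ((norm (g x))\<^sup>2)
      \<le> 2 * (\<integral>\<^sup>+h. ennreal (\<rho> \<delta> h * (norm (g (x + h) - g x))\<^sup>2) \<partial>lborel)
        + 2 * (\<Sum>i\<in>UNIV. ennreal (\<Omega>_partial_L1 i / \<delta>)
          * (\<integral>\<^sup>+y\<in>torus_cube. ennreal ((f y)\<^sup>2 * \<bar>periodization (\<rho>_partial \<delta> i) (y - x)\<bar>) \<partial>lborel))"
proof -
  have "(g x $ i)\<^sup>2 \<le> 2 * (g x $ i - mollify \<delta> g i x)\<^sup>2 + 2 * (mollify \<delta> g i x)\<^sup>2" for i
    using sum_squares_ge_zero[of "g x $ i - 2 * mollify \<delta> g i x" 0]
    by (simp add: power2_eq_square algebra_simps)
  then have "(norm (g x))\<^sup>2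
      \<le> 2 * (\<Sum>i\<in>UNIV. (g x $ i - mollify \<delta> g i x)\<^sup>2) + 2 * (\<Sum>i\<in>UNIV. (mollify \<delta> g i x)\<^sup>2)"
    unfolding power2_norm_vec by (simp add: sum_distrib_left flip: sum.distrib) (rule sum_mono)
  then have "ennreal ((norm (g x))\<^sup>2)
      \<le> ennreal (2 * (\<Sum>i\<in>UNIV. (g x $ i - mollify \<delta> g i x)\<^sup>2) + 2 * (\<Sum>i\<in>UNIV. (mollify \<delta> g i x)\<^sup>2))"
    by (rule ennreal_leI)
  also have "\<dots> = 2 * ennreal (\<Sum>i\<in>UNIV. (g x $ i - mollify \<delta> g i x)\<^sup>2)
      + 2 * (\<Sum>i\<in>UNIV. ennreal ((mollify \<delta> g i x)\<^sup>2))"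
    by (simp add: ennreal_plus ennreal_mult sum_nonneg)
  also have "\<dots> \<le> 2 * (\<integral>\<^sup>+h. ennreal (\<rho> \<delta> h * (norm (g (x + h) - g x))\<^sup>2) \<partial>lborel)
        + 2 * (\<Sum>i\<in>UNIV. ennreal (\<Omega>_partial_L1 i / \<delta>)
          * (\<integral>\<^sup>+y\<in>torus_cube. ennreal ((f y)\<^sup>2 * \<bar>periodization (\<rho>_partial \<delta> i) (y - x)\<bar>) \<partial>lborel))"
    using sum_diff_mollify_squared_le[OF H1_weak_gradD(4)[OF H] \<delta>(1)] mollify_squared_le[OF assms]
    by (intro add_mono mult_left_mono sum_mono) auto
  finally show ?thesis .
qed

lemma L2_grad_le:
  assumes H: "H1_weak_grad f g" and \<delta>: "0 < \<delta>" "\<delta> < 1/2"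
  shows "(\<integral>\<^sup>+x\<in>torus_cube. ennreal ((norm (g x))\<^sup>2) \<partial>lborel)
     \<le> 2 * (\<integral>\<^sup>+h. ennreal (\<rho> \<delta> h) * shift_energy g h \<partial>lborel)
       + 2 * (ennreal (\<Sum>i\<in>UNIV. (\<Omega>_partial_L1 i / \<delta>)\<^sup>2) * (\<integral>\<^sup>+y\<in>torus_cube. ennreal ((f y)\<^sup>2) \<partial>lborel))"
proof -
  note F = H1_weak_gradD[OF H]
  have [measurable]: "f \<in> borel_measurable borel" "g \<in> borel_measurable borel"
    "periodization (\<rho>_partial \<delta> i) \<in> borel_measurable borel" for i
    using F(3,4) periodization_\<rho>_partial_borel_measurable[OF \<delta>] by auto
  define J where "J x = (\<integral>\<^sup>+h. ennreal (\<rho> \<delta> h * (norm (g (x + h) - g x))\<^sup>2) \<partial>lborel)" for x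
  define K where "K i x = ennreal (\<Omega>_partial_L1 i / \<delta>)
    * (\<integral>\<^sup>+y\<in>torus_cube. ennreal ((f y)\<^sup>2 * \<bar>periodization (\<rho>_partial \<delta> i) (y - x)\<bar>) \<partial>lborel)" for i x
  have [measurable]: "J \<in> borel_measurable borel" "K i \<in> borel_measurable borel" for i
    unfolding J_def K_def by measurable
  have J: "(\<integral>\<^sup>+x\<in>torus_cube. J x \<partial>lborel) = (\<integral>\<^sup>+h. ennreal (\<rho> \<delta> h) * shift_energy g h \<partial>lborel)"
    unfolding J_def by (rule nn_integral_torus_\<rho>_shift[OF F(4) \<delta>(1)])
  have K: "(\<integral>\<^sup>+x\<in>torus_cube. K i x \<partial>lborel) = ennreal (\<Omega>_partial_L1 i / \<delta>)
      * (ennreal (\<Omega>_partial_L1 i / \<delta>) * (\<integral>\<^sup>+y\<in>torus_cube. ennreal ((f y)\<^sup>2) \<partial>lborel))" for i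
  proof -
    have "(\<integral>\<^sup>+x\<in>torus_cube. (\<integral>\<^sup>+y\<in>torus_cube.
          ennreal ((f y)\<^sup>2) * ennreal \<bar>periodization (\<rho>_partial \<delta> i) (y - x)\<bar> \<partial>lborel) \<partial>lborel)
        = ennreal (\<Omega>_partial_L1 i / \<delta>) * (\<integral>\<^sup>+y\<in>torus_cube. ennreal ((f y)\<^sup>2) \<partial>lborel)"
      by (intro nn_integral_torus_convolution nn_integral_torus_abs_periodization_\<rho>_partial_reflect \<delta>)
         measurable
    moreover have "(\<integral>\<^sup>+x\<in>torus_cube. K i x \<partial>lborel)
        = ennreal (\<Omega>_partial_L1 i / \<delta>) * (\<integral>\<^sup>+x\<in>torus_cube. (\<integral>\<^sup>+y\<in>torus_cube.
          ennreal ((f y)\<^sup>2) * ennreal \<bar>periodization (\<rho>_partial \<delta> i) (y - x)\<bar> \<partial>lborel) \<partial>lborel)"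
      unfolding K_def by (subst nn_integral_cmult[symmetric]) (simp_all add: ennreal_mult mult.assoc)
    ultimately show ?thesis by simp
  qed
  have "(\<integral>\<^sup>+x\<in>torus_cube. ennreal ((norm (g x))\<^sup>2) \<partial>lborel)
      \<le> (\<integral>\<^sup>+x\<in>torus_cube. 2 * J x + (\<Sum>i\<in>UNIV. 2 * K i x) \<partial>lborel)"
    using norm_squared_le_mollified[OF H \<delta>]
    by (intro nn_integral_mono mult_right_mono) (simp_all add: J_def K_def sum_distrib_left)
  also have "\<dots> = 2 * (\<integral>\<^sup>+x\<in>torus_cube. J x \<partial>lborel) + (\<Sum>i\<in>UNIV. 2 * (\<integral>\<^sup>+x\<in>torus_cube. K i x \<partial>lborel))"
    by (simp add: nn_set_integral_add nn_integral_sum nn_integral_cmult[symmetric]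
                  sum_distrib_right mult.assoc)
  also have "\<dots> = 2 * (\<integral>\<^sup>+h. ennreal (\<rho> \<delta> h) * shift_energy g h \<partial>lborel)
      + 2 * (ennreal (\<Sum>i\<in>UNIV. (\<Omega>_partial_L1 i / \<delta>)\<^sup>2) * (\<integral>\<^sup>+y\<in>torus_cube. ennreal ((f y)\<^sup>2) \<partial>lborel))"
    using sum_ennreal_mult_self_mult[of "\<lambda>i. \<Omega>_partial_L1 i / \<delta>"] \<Omega>_partial_L1_nonneg \<delta>
    by (simp only: J K sum_distrib_left[symmetric]) simp
  finally show ?thesis .
qed

end

lemma nat_multiple_between:
  fixes \<epsilon> \<delta>0 :: real
  assumes "0 < \<epsilon>" "\<epsilon> < \<delta>0"
  obtains m :: nat where "1 \<le> m" "\<delta>0 \<le> real m * \<epsilon>" "real m * \<epsilon> < 2 * \<delta>0"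
proof
  define m where "m = nat \<lceil>\<delta>0 / \<epsilon>\<rceil>"
  have "real m = of_int \<lceil>\<delta>0 / \<epsilon>\<rceil>" using assms by (simp add: m_def)
  then have m: "\<delta>0 / \<epsilon> \<le> real m" "real m < \<delta>0 / \<epsilon> + 1" by linarith+
  moreover have "1 < \<delta>0 / \<epsilon>" using assms by simp
  ultimately show "1 \<le> m" by linarith
  show "\<delta>0 \<le> real m * \<epsilon>" using m(1) assms by (simp add: field_simps)
  show "real m * \<epsilon> < 2 * \<delta>0" using m(2) assms by (simp add: field_simps)
qed

context mollifier
begin

lemma H1_sq_le_nonlocal:
  fixes \<gamma> \<delta>0 :: real
  assumes H: "H1_weak_grad f g" and \<delta>0: "0 < \<delta>0" "\<delta>0 \<le> 1/8" "8 * \<delta>0\<^sup>2 \<le> \<gamma>"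
    and \<epsilon>: "0 < \<epsilon>" "\<epsilon> < \<delta>0"
  shows "ennreal (H1_sq f g)
     \<le> ennreal \<gamma> * (ennreal (1 / \<epsilon>\<^sup>2) * (\<integral>\<^sup>+h. ennreal (\<rho> \<epsilon> h) * shift_energy g h \<partial>lborel))
       + ennreal ((1 + 2 * (\<Sum>i\<in>UNIV. (\<Omega>_partial_L1 i / \<delta>0)\<^sup>2)) * L2_sq f)"
proof -
  note F = H1_weak_gradD[OF H]
  obtain m where m: "1 \<le> m" "\<delta>0 \<le> real m * \<epsilon>" "real m * \<epsilon> < 2 * \<delta>0"
    using nat_multiple_between[OF \<epsilon>] by blast
  define N where "N = (\<integral>\<^sup>+h. ennreal (\<rho> \<epsilon> h) * shift_energy g h \<partial>lborel)"
  define L where "L = (\<integral>\<^sup>+y\<in>torus_cube. ennreal ((f y)\<^sup>2) \<partial>lborel)"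
  define S where "S = (\<Sum>i\<in>UNIV. (\<Omega>_partial_L1 i / \<delta>0)\<^sup>2)"
  have "(\<Omega>_partial_L1 i / (real m * \<epsilon>))\<^sup>2 \<le> (\<Omega>_partial_L1 i / \<delta>0)\<^sup>2" for i
    using \<Omega>_partial_L1_nonneg[of i] \<delta>0 m \<epsilon> by (intro power_mono divide_left_mono) auto
  then have "2 * (\<integral>\<^sup>+h. ennreal (\<rho> (real m * \<epsilon>) h) * shift_energy g h \<partial>lborel)
      + 2 * (ennreal (\<Sum>i\<in>UNIV. (\<Omega>_partial_L1 i / (real m * \<epsilon>))\<^sup>2) * L)
      \<le> 2 * (ennreal ((real m)\<^sup>2) * N) + 2 * (ennreal S * L)"
    unfolding N_def S_def using mollified_shift_energy_scale_le[OF F(4) F(2) m(1) \<epsilon>(1)]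
    by (intro add_mono mult_left_mono mult_right_mono ennreal_leI sum_mono) auto
  with L2_grad_le[OF H, of "real m * \<epsilon>"] m \<epsilon> \<delta>0
  have "(\<integral>\<^sup>+x\<in>torus_cube. ennreal ((norm (g x))\<^sup>2) \<partial>lborel)
      \<le> 2 * (ennreal ((real m)\<^sup>2) * N) + 2 * (ennreal S * L)"
    unfolding L_def by (auto elim: order_trans)
  then have "ennreal (H1_sq f g) \<le> 2 * (ennreal ((real m)\<^sup>2) * N) + (L + 2 * (ennreal S * L))"
    unfolding ennreal_H1_sq[OF H] L_def[symmetric] by (simp add: add_left_mono ac_simps)
  also have "2 * (ennreal ((real m)\<^sup>2) * N) \<le> ennreal \<gamma> * (ennreal (1 / \<epsilon>\<^sup>2) * N)"
  proof -
    have "2 * (real m * \<epsilon>)\<^sup>2 \<le> \<gamma>"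
      using m \<epsilon> \<delta>0 power_strict_mono[of "real m * \<epsilon>" "2 * \<delta>0" 2] by (simp add: power_mult_distrib)
    then have "2 * (real m)\<^sup>2 \<le> \<gamma> * (1 / \<epsilon>\<^sup>2)"
      using \<epsilon> by (simp add: field_simps power_mult_distrib)
    moreover have "0 \<le> \<gamma>" using \<delta>0(3) zero_le_power2[of \<delta>0] by linarith
    ultimately have "ennreal (2 * (real m)\<^sup>2) \<le> ennreal \<gamma> * ennreal (1 / \<epsilon>\<^sup>2)"
      by (simp add: ennreal_leI flip: ennreal_mult)
    then show ?thesis by (simp add: ennreal_mult mult_right_mono flip: mult.assoc)
  qed
  also have "L + 2 * (ennreal S * L) = ennreal ((1 + 2 * S) * L2_sq f)"
    using ennreal_L2_sq[OF H] L2_sq_nonneg[of f]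
    by (simp add: L_def S_def sum_nonneg ennreal_plus ennreal_mult ring_distribs mult_ac)
  finally show ?thesis unfolding N_def S_def by (simp add: add_right_mono)
qed

end

theorem lemmaC3:
  fixes \<omega> :: "real \<Rightarrow> real" and \<gamma> :: real
  assumes smooth_\<omega>: "smooth (\<lambda>x::real^'n. \<omega> (norm x))"
    and nonneg_\<omega>: "\<forall>x::real^'n. 0 \<le> \<omega> (norm x)"
    and supp_\<omega>: "\<forall>x::real^'n. norm x > 1 \<longrightarrow> \<omega> (norm x) = 0"
    and int_\<omega>: "integrable lborel (\<lambda>x::real^'n. \<omega> (norm x))"
    and int1_\<omega>: "integral\<^sup>L lborel (\<lambda>x::real^'n. \<omega> (norm x)) = 1"
    and \<gamma>: "0 < \<gamma>" "\<gamma> < 1"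
  shows "\<exists>\<epsilon>0 > 0. \<exists>C \<ge> 0. \<forall>\<epsilon>. 0 < \<epsilon> \<and> \<epsilon> < \<epsilon>0 \<longrightarrow>
     (\<forall>(f :: real^'n \<Rightarrow> real) g. H1_weak_grad f g \<longrightarrow>
        ennreal (H1_sq f g)
          \<le> ennreal \<gamma> * (\<integral>\<^sup>+ x\<in>torus_cube. (\<integral>\<^sup>+ y\<in>torus_cube.
                 ennreal ((norm (g x - g y))\<^sup>2 / \<epsilon>\<^sup>2 * moll \<omega> \<epsilon> CARD('n) (tdist x y)) \<partial>lborel) \<partial>lborel)
            + ennreal (C * L2_sq f))"
proof -
  interpret mollifier "\<lambda>x::real^'n. \<omega> (norm x)"
    using smooth_\<omega> nonneg_\<omega> supp_\<omega> int1_\<omega> by unfold_locales auto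
  define \<delta>0 where "\<delta>0 = min (1/8) (sqrt (\<gamma> / 8))"
  have \<delta>0: "0 < \<delta>0" "\<delta>0 \<le> 1/8" "8 * \<delta>0\<^sup>2 \<le> \<gamma>"
    using \<gamma> real_sqrt_pow2[of "\<gamma> / 8"] power_mono[of \<delta>0 "sqrt (\<gamma> / 8)" 2]
    by (auto simp: \<delta>0_def)
  define C where "C = 1 + 2 * (\<Sum>i\<in>UNIV. (\<Omega>_partial_L1 i / \<delta>0)\<^sup>2)"
  have "C \<ge> 0" unfolding C_def by (simp add: sum_nonneg)
  moreover have "ennreal (H1_sq f g)
      \<le> ennreal \<gamma> * (\<integral>\<^sup>+ x\<in>torus_cube. (\<integral>\<^sup>+ y\<in>torus_cube.
            ennreal ((norm (g x - g y))\<^sup>2 / \<epsilon>\<^sup>2 * moll \<omega> \<epsilon> CARD('n) (tdist x y)) \<partial>lborel) \<partial>lborel)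
        + ennreal (C * L2_sq f)"
    if \<epsilon>: "0 < \<epsilon>" "\<epsilon> < \<delta>0" and H: "H1_weak_grad f g" for \<epsilon> and f :: "real^'n \<Rightarrow> real" and g
  proof -
    have "moll \<omega> \<epsilon> CARD('n) (norm h) = \<rho> \<epsilon> h" for h :: "real^'n"
      using \<epsilon> by (simp add: moll_def \<rho>_def)
    with \<epsilon> \<delta>0 show ?thesis
      unfolding C_def
      by (subst nonlocal_energy_eq[OF H1_weak_gradD(4,2)[OF H]]) (auto intro: H1_sq_le_nonlocal[OF H])
  qed
  ultimately show ?thesis using \<delta>0(1) by blast
qed

end
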